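(* There exist constants $E,A'>0$ independent of $h$ and $T$, and $h_0,T_0>0$, such that for all $0<h<h_0$ and $T>T_0$, writing $N=[T/h]$, $e_i=v_i^{\{h,T\}}-v_i^{\{h,\infty\}}$ and $e_i=e_i^++e_i^-+e_i^0$ with $e_i^\pm\in V^\pm(u_i)$, $e_i^0\in V^0(u_i)$, one has $$\max_{1\le i\le N}\|e_i^+\|\le E\sqrt T,\qquad \max_{1\le i\le N}\|e_i^-\|\le E\sqrt T,$$ and consequently $$\Big|\frac hT\sum_{i=1}^{N}DJ(u_i,0)\big(e_i^++e_i^-\big)\Big|\le\frac{A'}{\sqrt T}.$$
   Context: Setting: ODE $\frac{du}{dt}=f(u,s)$ on $\mathbb{R}^m$ with flow $\varphi_s(u,t)$, $(s,u,t)\mapsto\varphi_s(u,t)$ of class $C^2$, $\varphi_s(u,0)=u$, $\partial_h\varphi_s(u,h)=f(\varphi_s(u,h),s)$; compact uniformly hyperbolic attractor $\Lambda$ at $s=0$ with constants $C>0$, $\lambda\in(0,1)$ and continuous splitting $\mathbb{R}^m=V^+(u)\oplus V^-(u)\oplus V^0(u)$, invariant under $D\varphi_0(u,h)$, where $V^+(u)=\{v:\|D\varphi_0(u,t)v\|\le C\lambda^{-t}\|v\|\ \forall t<0\}$, $V^-(u)=\{v:\|D\varphi_0(u,t)v\|\le C\lambda^{t}\|v\|\ \forall t>0\}$, $V^0(u)=\mathrm{span}f(u,0)$; also $\partial_h\partial_s\varphi_0$ continuous, so that the shadowing direction is bounded independently of $h$. $J$ is $C^1$ with $u$-derivative $DJ$.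 Fix $\alpha>0$, $h>0$, $T>0$, $\{u_i\}_{i\in\mathbb{Z}}\subset\Lambda$ with $u_{i+1}=\varphi_0(u_i,h)$. $(v_i^{\{h,T\}},\eta_i^{\{h,T\}})_{i=1}^{N}$ solves $\min\sum_{i=1}^N(\|v_i\|^2+\alpha\eta_i^2)$ subject to $v_{i+1}=D\varphi_0(u_i,h)v_i+\partial_s\varphi_0(u_i,h)+h\eta_i\partial_h\varphi_0(u_i,h)$. $(v_i^{\{h,\infty\}},\eta_i^{\{h,\infty\}})$ is the shadowing direction, i.e. $\big(\frac{du_i^s}{ds},\frac{d\tau_i^s}{ds}\big)|_{s=0}$ where $(u_i^s,\tau_i^s)$ is the shadowing trajectory: the sequence, close to $(u_i,1)$ uniformly in $i$, with $u_i^s=\varphi_s(u_{i-1}^s,h\tau_{i-1}^s)$, depending $i$-uniformly $C^1$ on $s$. *)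

theory Defs
  imports "HOL-Analysis.Analysis"
begin

definition C1_map :: "('a::real_normed_vector \<Rightarrow> 'b::real_normed_vector) \<Rightarrow> bool" where
  "C1_map g \<longleftrightarrow> (\<exists>g'. (\<forall>x. (g has_derivative blinfun_apply (g' x)) (at x)) \<and> continuous_on UNIV g')"

definition C2_map :: "('a::real_normed_vector \<Rightarrow> 'b::real_normed_vector) \<Rightarrow> bool" where
  "C2_map g \<longleftrightarrow> (\<exists>g'. (\<forall>x. (g has_derivative blinfun_apply (g' x)) (at x)) \<and> C1_map g')"

definition V0 :: "('a::real_normed_vector \<Rightarrow> real \<Rightarrow> 'a) \<Rightarrow> 'a \<Rightarrow> 'a set" where
  "V0 f u = span {f u 0}"

text \<open>Dphi u t is the u-derivative of phi_0 at (u,t).\<close>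

definition hyperbolic_splitting ::
  "('a::euclidean_space \<Rightarrow> real \<Rightarrow> 'a) \<Rightarrow> (real \<Rightarrow> 'a \<Rightarrow> real \<Rightarrow> 'a) \<Rightarrow> ('a \<Rightarrow> real \<Rightarrow> 'a \<Rightarrow>\<^sub>L 'a)
    \<Rightarrow> 'a set \<Rightarrow> real \<Rightarrow> real \<Rightarrow> ('a \<Rightarrow> 'a set) \<Rightarrow> ('a \<Rightarrow> 'a set) \<Rightarrow> bool" where
  "hyperbolic_splitting f phi Dphi Lambda C lam Vp Vm \<longleftrightarrow>
     (\<forall>u\<in>Lambda. subspace (Vp u) \<and> subspace (Vm u)) \<and>
     (\<forall>u\<in>Lambda. \<forall>a\<in>Vp u. \<forall>b\<in>Vm u. \<forall>c\<in>V0 f u. a + b + c = 0 \<longrightarrow> a = 0 \<and> b = 0 \<and> c = 0) \<and>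
     (\<exists>Pp Pm Pz :: 'a \<Rightarrow> 'a \<Rightarrow>\<^sub>L 'a.
        continuous_on Lambda Pp \<and> continuous_on Lambda Pm \<and> continuous_on Lambda Pz \<and>
        (\<forall>u\<in>Lambda. \<forall>v. Pp u v \<in> Vp u \<and> Pm u v \<in> Vm u \<and> Pz u v \<in> V0 f u
                         \<and> v = Pp u v + Pm u v + Pz u v)) \<and>
     (\<forall>u\<in>Lambda. \<forall>t. Dphi u t ` Vp u = Vp (phi 0 u t) \<and> Dphi u t ` Vm u = Vm (phi 0 u t)) \<and>
     (\<forall>u\<in>Lambda. \<forall>v\<in>Vp u. \<forall>t<0. norm (Dphi u t v) \<le> C * lam powr (- t) * norm v) \<and>
     (\<forall>u\<in>Lambda. \<forall>v\<in>Vm u. \<forall>t>0. norm (Dphi u t v) \<le> C * lam powr t * norm v)"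

text \<open>Least squares shadowing problem on indices 1..N: constraint for 1 <= i < N,
  objective sum_{i=1}^N (|v_i|^2 + alpha eta_i^2).  dsphi u h = d/ds phi_s(u,h) at s=0,
  and d/dh phi_0(u,h) = f(phi_0(u,h),0).\<close>

definition lss_feasible ::
  "(real \<Rightarrow> 'a \<Rightarrow> real \<Rightarrow> 'a) \<Rightarrow> ('a::real_normed_vector \<Rightarrow> real \<Rightarrow> 'a) \<Rightarrow> ('a \<Rightarrow> real \<Rightarrow> 'a \<Rightarrow>\<^sub>L 'a)
    \<Rightarrow> ('a \<Rightarrow> real \<Rightarrow> 'a) \<Rightarrow> real \<Rightarrow> (int \<Rightarrow> 'a) \<Rightarrow> int \<Rightarrow> (int \<Rightarrow> 'a) \<Rightarrow> (int \<Rightarrow> real) \<Rightarrow> bool" where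
  "lss_feasible phi f Dphi dsphi h u N v eta \<longleftrightarrow>
     (\<forall>i. 1 \<le> i \<and> i < N \<longrightarrow>
        v (i + 1) = Dphi (u i) h (v i) + dsphi (u i) h + (h * eta i) *\<^sub>R f (phi 0 (u i) h) 0)"

definition lss_objective :: "real \<Rightarrow> int \<Rightarrow> (int \<Rightarrow> 'a::real_normed_vector) \<Rightarrow> (int \<Rightarrow> real) \<Rightarrow> real" where
  "lss_objective alpha N v eta = (\<Sum>i\<in>{1..N}. (norm (v i))\<^sup>2 + alpha * (eta i)\<^sup>2)"

definition lss_solution ::
  "(real \<Rightarrow> 'a \<Rightarrow> real \<Rightarrow> 'a) \<Rightarrow> ('a::real_normed_vector \<Rightarrow> real \<Rightarrow> 'a) \<Rightarrow> ('a \<Rightarrow> real \<Rightarrow> 'a \<Rightarrow>\<^sub>L 'a)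
    \<Rightarrow> ('a \<Rightarrow> real \<Rightarrow> 'a) \<Rightarrow> real \<Rightarrow> real \<Rightarrow> (int \<Rightarrow> 'a) \<Rightarrow> int \<Rightarrow> (int \<Rightarrow> 'a) \<Rightarrow> (int \<Rightarrow> real) \<Rightarrow> bool" where
  "lss_solution phi f Dphi dsphi alpha h u N v eta \<longleftrightarrow>
     lss_feasible phi f Dphi dsphi h u N v eta \<and>
     (\<forall>v' eta'. lss_feasible phi f Dphi dsphi h u N v' eta' \<longrightarrow>
        lss_objective alpha N v eta \<le> lss_objective alpha N v' eta')"

text \<open>Shadowing direction: (vinf, etainf) = d/ds (u_i^s, tau_i^s) at s = 0, where
  (u^s, tau^s) is a shadowing trajectory: equal to (u_i, 1) at s = 0,
  u_i^s = phi_s(u_{i-1}^s, h tau_{i-1}^s) for |s| < eps, and C^1 in s uniformly in i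
  (derivatives bounded and equicontinuous in s, uniformly in i); in particular it stays
  uniformly close to (u_i,1) for small s.\<close>

definition shadowing_direction ::
  "(real \<Rightarrow> 'a::real_normed_vector \<Rightarrow> real \<Rightarrow> 'a) \<Rightarrow> real \<Rightarrow> (int \<Rightarrow> 'a) \<Rightarrow> (int \<Rightarrow> 'a) \<Rightarrow> (int \<Rightarrow> real) \<Rightarrow> bool" where
  "shadowing_direction phi h u vinf etainf \<longleftrightarrow>
     (\<exists>eps>0. \<exists>us taus dus dtaus.
        us 0 = u \<and> taus 0 = (\<lambda>i. 1) \<and>
        (\<forall>s i. \<bar>s\<bar> < eps \<longrightarrow> us s i = phi s (us s (i - 1)) (h * taus s (i - 1))) \<and>
        (\<forall>s i. \<bar>s\<bar> < eps \<longrightarrow> ((\<lambda>r. us r i) has_vector_derivative dus s i) (at s)) \<and>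
        (\<forall>s i. \<bar>s\<bar> < eps \<longrightarrow> ((\<lambda>r. taus r i) has_real_derivative dtaus s i) (at s)) \<and>
        (\<exists>B. \<forall>s i. \<bar>s\<bar> < eps \<longrightarrow> norm (dus s i) \<le> B \<and> \<bar>dtaus s i\<bar> \<le> B) \<and>
        (\<forall>e>0. \<exists>d>0. \<forall>s s' i. \<bar>s\<bar> < eps \<longrightarrow> \<bar>s'\<bar> < eps \<longrightarrow> \<bar>s - s'\<bar> < d \<longrightarrow>
            norm (dus s i - dus s' i) < e \<and> \<bar>dtaus s i - dtaus s' i\<bar> < e) \<and>
        vinf = dus 0 \<and> etainf = dtaus 0)"

end

theory Submission
  imports Defs
begin

text \<open>
  The error \<open>e\<^sub>i = v\<^sub>i - v\<^sub>i\<^sup>\<infinity>\<close> satisfies the linearized recurrence up to a neutral term, so its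
  unstable and stable components are transported by \<open>D\<phi>\<close>: the unstable one decays
  exponentially backward from \<open>i = N\<close>, the stable one forward from \<open>i = 1\<close>. To control them at
  the endpoints, compare the least squares objective with the competitor made of the hyperbolic
  parts of the shadowing direction; these are bounded independently of \<open>h\<close>, because the
  forcing \<open>\<partial>\<^sub>s\<phi>(u, h)\<close> is \<open>O(h)\<close> while \<open>\<Sum>\<^sub>k \<lambda>\<^sup>k\<^sup>h = O(1/h)\<close>. Hence \<open>\<Sum>\<^sub>i |v\<^sub>i|\<^sup>2 = O(N)\<close>, so in each
  window of one time unit next to an endpoint some \<open>|v\<^sub>i|\<close> is \<open>O(\<surd>T)\<close>; transporting over at most one
  time unit gives \<open>O(\<surd>T)\<close> at the endpoints, and the exponential decay makes the weighted sum
  \<open>h/T \<Sum>\<^sub>i DJ(e\<^sub>i\<^sup>+ + e\<^sub>i\<^sup>-)\<close> of size \<open>O(\<surd>T \<cdot> h/T \<cdot> 1/h) = O(1/\<surd>T)\<close>.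
\<close>

lemma C1_map_lipschitz_on_cball:
  fixes g :: "'a::euclidean_space \<Rightarrow> 'b::real_normed_vector"
  assumes "C1_map g"
  shows "\<exists>L. L-lipschitz_on (cball c r) g"
proof -
  obtain g' where g': "\<And>x. (g has_derivative blinfun_apply (g' x)) (at x)" and "continuous_on UNIV g'"
    using assms unfolding C1_map_def by blast
  then have "compact (g' ` cball c r)"
    by (intro compact_continuous_image) (auto intro: continuous_on_subset)
  then obtain B where B: "B > 0" "\<And>x. x \<in> cball c r \<Longrightarrow> norm (g' x) \<le> B"
    by (auto dest!: compact_imp_bounded simp: bounded_pos)
  have "B-lipschitz_on (cball c r) g"
    by (rule bounded_derivative_imp_lipschitz[where f'="\<lambda>x. blinfun_apply (g' x)"])
       (use g' B in \<open>auto intro: has_derivative_at_withinI simp: norm_blinfun.rep_eq[symmetric]\<close>)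
  then show ?thesis ..
qed

lemma C1_map_continuous:
  assumes "C1_map g"
  shows "continuous_on UNIV g"
  using assms has_derivative_continuous unfolding C1_map_def
  by (blast intro: continuous_at_imp_continuous_on)

lemma partial_derivative_bounded_on:
  fixes J :: "'a::euclidean_space \<Rightarrow> real \<Rightarrow> real"
  assumes "C1_map (\<lambda>(u, s). J u s)"
    and "\<forall>u s. ((\<lambda>x. J x s) has_derivative blinfun_apply (DJ u s)) (at u)"
    and "compact K"
  shows "\<exists>B>0. \<forall>u\<in>K. \<forall>v. \<bar>DJ u 0 v\<bar> \<le> B * norm v"
proof -
  obtain JD where JD: "\<And>x. ((\<lambda>(u, s). J u s) has_derivative blinfun_apply (JD x)) (at x)"
    and "continuous_on UNIV JD"
    using assms(1) unfolding C1_map_def by blast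
  have DJ_eq: "DJ u s v = JD (u, s) (v, 0)" for u s v
  proof -
    have "((\<lambda>x. (x, s)) has_derivative (\<lambda>v. (v, 0))) (at u)"
      by (auto intro!: derivative_eq_intros)
    from has_derivative_compose[OF this JD]
    have "((\<lambda>x. J x s) has_derivative (\<lambda>v. JD (u, s) (v, 0))) (at u)" by simp
    with assms(2) have "blinfun_apply (DJ u s) = (\<lambda>v. JD (u, s) (v, 0))"
      using has_derivative_unique by blast
    then show ?thesis by simp
  qed
  have "compact ((\<lambda>u. (u, 0::real)) ` K)"
    by (intro compact_continuous_image assms(3)) (auto intro!: continuous_intros)
  then have "compact (JD ` (\<lambda>u. (u, 0::real)) ` K)"
    by (rule compact_continuous_image[OF continuous_on_subset[OF \<open>continuous_on UNIV JD\<close>], rotated]) simp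
  then have "bounded (JD ` (\<lambda>u. (u, 0::real)) ` K)" by (rule compact_imp_bounded)
  then obtain B where "B > 0" "\<forall>x \<in> JD ` (\<lambda>u. (u, 0::real)) ` K. norm x \<le> B"
    unfolding bounded_pos by blast
  then have B: "B > 0" "\<And>u. u \<in> K \<Longrightarrow> norm (JD (u, 0)) \<le> B" by auto
  have "\<bar>DJ u 0 v\<bar> \<le> B * norm v" if "u \<in> K" for u v
  proof -
    have "\<bar>DJ u 0 v\<bar> \<le> norm (JD (u, 0)) * norm (v, 0::real)"
      unfolding DJ_eq using norm_blinfun[of "JD (u, 0)" "(v, 0)"] by simp
    also have "\<dots> \<le> B * norm v"
      using B(2)[OF that] by (simp add: norm_Pair mult_right_mono)
    finally show ?thesis .
  qed
  with B(1) show ?thesis by blast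
qed

lemma gronwall_vanishing:
  fixes q :: "real \<Rightarrow> real"
  assumes t: "0 \<le> t" and "q 0 = 0" "0 \<le> q t"
    and deriv: "\<And>s. 0 \<le> s \<Longrightarrow> s \<le> t \<Longrightarrow> \<exists>D. (q has_real_derivative D) (at s) \<and> D \<le> K * q s"
  shows "q t = 0"
proof -
  define w where "w s = q s * exp (- K * s)" for s
  have "w t \<le> w 0"
  proof (rule DERIV_nonpos_imp_nonincreasing[OF t])
    fix s assume "0 \<le> s" "s \<le> t"
    then obtain D where "(q has_real_derivative D) (at s)" "D \<le> K * q s" using deriv by blast
    moreover from this(1) have "(w has_real_derivative (D - K * q s) * exp (- K * s)) (at s)"
      unfolding w_def by (auto intro!: derivative_eq_intros simp: algebra_simps)
    ultimately show "\<exists>D. (w has_real_derivative D) (at s) \<and> D \<le> 0"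
      by (intro exI conjI) (auto intro!: mult_nonpos_nonneg)
  qed
  with assms(2,3) show ?thesis by (simp add: w_def mult_le_0_iff)
qed

lemma autonomous_ode_unique_forward:
  fixes y z :: "real \<Rightarrow> 'b::real_inner"
  assumes t: "0 \<le> t"
    and y: "\<And>s. (y has_vector_derivative g (y s)) (at s)"
    and z: "\<And>s. (z has_vector_derivative g (z s)) (at s)"
    and init: "y 0 = z 0"
    and lip: "\<And>r. \<exists>L. L-lipschitz_on (cball 0 r) g"
  shows "y t = z t"
proof -
  have "continuous_on {0..t} y" "continuous_on {0..t} z"
    using y z by (auto intro!: continuous_at_imp_continuous_on has_vector_derivative_continuous)
  then have "bounded (y ` {0..t} \<union> z ` {0..t})"
    by (auto intro!: compact_imp_bounded compact_continuous_image)
  then obtain r where "\<forall>x \<in> y ` {0..t} \<union> z ` {0..t}. norm x \<le> r"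
    unfolding bounded_iff by blast
  then have r: "y ` {0..t} \<union> z ` {0..t} \<subseteq> cball 0 r" by auto
  obtain L where L: "L-lipschitz_on (cball 0 r) g" using lip by blast
  define q where "q s = inner (y s - z s) (y s - z s)" for s
  have "q t = 0"
  proof (rule gronwall_vanishing[OF t])
    fix s assume s: "0 \<le> s" "s \<le> t"
    let ?d = "y s - z s" and ?e = "g (y s) - g (z s)"
    have "((\<lambda>s. y s - z s) has_derivative (\<lambda>h. h *\<^sub>R ?e)) (at s)"
      using has_vector_derivative_diff[OF y z] by (simp add: has_vector_derivative_def)
    from has_derivative_inner[OF this this]
    have "(q has_real_derivative 2 * inner ?d ?e) (at s)"
      unfolding q_def has_field_derivative_def
      by (rule has_derivative_eq_rhs) (auto simp: fun_eq_iff inner_commute algebra_simps)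
    moreover have "y s \<in> cball 0 r" "z s \<in> cball 0 r" using r s by (auto simp: image_subset_iff)
    then have "norm ?e \<le> L * norm ?d" by (intro lipschitz_on_normD[OF L])
    then have "2 * inner ?d ?e \<le> 2 * L * q s"
      using norm_cauchy_schwarz[of ?d ?e] mult_left_mono[of "norm ?e" "L * norm ?d" "norm ?d"]
      by (simp add: q_def power2_norm_eq_inner[symmetric] power2_eq_square algebra_simps)
    ultimately show "\<exists>D. (q has_real_derivative D) (at s) \<and> D \<le> 2 * L * q s" by blast
  qed (use init in \<open>simp_all add: q_def\<close>)
  then show ?thesis by (simp add: q_def)
qed

lemma autonomous_ode_unique:
  fixes y z :: "real \<Rightarrow> 'b::real_inner"
  assumes y: "\<And>s. (y has_vector_derivative g (y s)) (at s)"
    and z: "\<And>s. (z has_vector_derivative g (z s)) (at s)"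
    and init: "y 0 = z 0"
    and lip: "\<And>r. \<exists>L. L-lipschitz_on (cball 0 r) g"
  shows "y t = z t"
proof (cases "0 \<le> t")
  case True
  then show ?thesis by (rule autonomous_ode_unique_forward[OF _ y z init lip])
next
  case False
  have reversed: "((\<lambda>s. x (- s)) has_vector_derivative - g (x (- s))) (at s)"
    if "\<And>s. (x has_vector_derivative g (x s)) (at s)" for x :: "real \<Rightarrow> 'b" and s
    using vector_diff_chain_at[OF has_vector_derivative_minus[OF has_vector_derivative_id], of x]
      that by (simp add: o_def)
  have "\<exists>L. L-lipschitz_on (cball 0 r) (\<lambda>a. - g a)" for r
    using lip[of r] lipschitz_on_minus by blast
  from autonomous_ode_unique_forward[of "- t", OF _ reversed reversed, OF _ y z _ this] init False
  show ?thesis by simp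
qed

lemma uniformly_bounded_linear_family:
  fixes P :: "'x::topological_space \<Rightarrow> 'a::euclidean_space \<Rightarrow> 'b::real_normed_vector"
  assumes "compact K" and cont: "\<And>v. continuous_on K (\<lambda>u. P u v)"
    and lin: "\<And>u. u \<in> K \<Longrightarrow> linear (P u)"
  shows "\<exists>B>0. \<forall>u\<in>K. \<forall>v. norm (P u v) \<le> B * norm v"
proof -
  have "\<exists>B>0. \<forall>u\<in>K. norm (P u b) \<le> B" for b
    using compact_imp_bounded[OF compact_continuous_image[OF cont assms(1)]]
    unfolding bounded_pos by blast
  then obtain Bb where Bb: "\<And>b. Bb b > 0" "\<And>b u. u \<in> K \<Longrightarrow> norm (P u b) \<le> Bb b"
    by metis
  define B where "B = (\<Sum>b\<in>Basis. Bb b)"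
  have "norm (P u v) \<le> B * norm v" if u: "u \<in> K" for u v
  proof -
    interpret linear "P u" using lin[OF u] .
    have "norm (P u v) = norm (\<Sum>b\<in>Basis. (v \<bullet> b) *\<^sub>R P u b)"
      by (subst euclidean_representation[symmetric, of v]) (simp add: sum scale)
    also have "\<dots> \<le> (\<Sum>b\<in>Basis. norm v * Bb b)"
    proof (rule sum_norm_le)
      fix b :: 'a assume "b \<in> Basis"
      then show "norm ((v \<bullet> b) *\<^sub>R P u b) \<le> norm v * Bb b"
        using Basis_le_norm[OF \<open>b \<in> Basis\<close>, of v] Bb(2)[OF u, of b]
        by (simp add: mult_mono')
    qed
    also have "\<dots> = B * norm v" by (simp add: B_def sum_distrib_left mult.commute)
    finally show ?thesis .
  qed
  moreover have "B > 0" unfolding B_def using Bb(1) by (intro sum_pos) auto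
  ultimately show ?thesis by blast
qed

lemma sum_power_less_le:
  fixes q :: real
  assumes "0 \<le> q" "q < 1"
  shows "(\<Sum>j<k. q ^ j) \<le> 1 / (1 - q)"
  using assms by (simp add: sum_gp_strict divide_right_mono)

lemma sum_power_icc_int_le:
  fixes q :: real and N :: int
  assumes "0 \<le> q" "q < 1"
  shows "(\<Sum>i\<in>{1..N}. q ^ nat (i - 1)) \<le> 1 / (1 - q)"
    and "(\<Sum>i\<in>{1..N}. q ^ nat (N - i)) \<le> 1 / (1 - q)"
proof -
  have "(\<Sum>i\<in>{1..N}. q ^ nat (i - 1)) = (\<Sum>k<nat N. q ^ k)"
    by (rule sum.reindex_bij_witness[of _ "\<lambda>k. int k + 1" "\<lambda>i. nat (i - 1)"]) auto
  then show "(\<Sum>i\<in>{1..N}. q ^ nat (i - 1)) \<le> 1 / (1 - q)"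
    using sum_power_less_le[OF assms] by simp
  have "(\<Sum>i\<in>{1..N}. q ^ nat (N - i)) = (\<Sum>k<nat N. q ^ k)"
    by (rule sum.reindex_bij_witness[of _ "\<lambda>k. N - int k" "\<lambda>i. nat (N - i)"]) auto
  then show "(\<Sum>i\<in>{1..N}. q ^ nat (N - i)) \<le> 1 / (1 - q)"
    using sum_power_less_le[OF assms] by simp
qed

lemma le_if_le_plus_power:
  fixes a b c q :: real
  assumes "0 \<le> q" "q < 1" and "\<And>k. a \<le> c * q ^ k + b"
  shows "a \<le> b"
proof -
  have "(\<lambda>k. c * q ^ k + b) \<longlonglongrightarrow> c * 0 + b"
    using assms(1,2) by (intro tendsto_intros LIMSEQ_power_zero) simp
  then show ?thesis using assms(3) by (auto intro: LIMSEQ_le_const)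
qed

lemma exists_le_average:
  fixes a :: "'i \<Rightarrow> real"
  assumes "finite I" "I \<noteq> {}" "(\<Sum>i\<in>I. a i) \<le> S"
  shows "\<exists>i\<in>I. a i * real (card I) \<le> S"
proof (rule ccontr)
  assume "\<not> ?thesis"
  then have "(\<Sum>i\<in>I. S) < (\<Sum>i\<in>I. a i * real (card I))"
    using assms(1,2) by (intro sum_strict_mono) auto
  then have "real (card I) * S < real (card I) * (\<Sum>i\<in>I. a i)"
    by (simp add: sum_distrib_right mult.commute)
  moreover have "0 < real (card I)" using assms(1,2) by (simp add: card_gt_0_iff)
  ultimately show False using assms(3) by (simp add: mult_less_cancel_left)
qed

lemma div_one_minus_exp_neg_le:
  fixes x :: real
  assumes "0 < x" "x \<le> 1"
  shows "x / (1 - exp (- x)) \<le> 2"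
proof -
  have "exp (- x) \<le> 1 / (1 + x)"
    using exp_ge_add_one_self[of x] assms by (simp add: exp_minus field_simps)
  also have "1 / (1 + x) \<le> 1 - x / 2"
    using assms by (simp add: field_simps)
  finally have "x / 2 \<le> 1 - exp (- x)" by simp
  moreover have "0 < x / 2" using assms by simp
  ultimately show ?thesis using assms by (simp add: field_simps)
qed

section \<open>Flows of class \<open>C\<^sup>2\<close>\<close>

locale C2_flow =
  fixes f :: "'a::euclidean_space \<Rightarrow> real \<Rightarrow> 'a"
    and phi :: "real \<Rightarrow> 'a \<Rightarrow> real \<Rightarrow> 'a"
    and Dphi :: "'a \<Rightarrow> real \<Rightarrow> 'a \<Rightarrow>\<^sub>L 'a"
    and dsphi :: "'a \<Rightarrow> real \<Rightarrow> 'a"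
  assumes phi_C2: "C2_map (\<lambda>(s, u, t). phi s u t)"
    and phi_init: "\<forall>s u. phi s u 0 = u"
    and phi_ode: "\<forall>s u t. ((\<lambda>t. phi s u t) has_vector_derivative f (phi s u t) s) (at t)"
    and Dphi_def: "\<forall>u t. ((\<lambda>x. phi 0 x t) has_derivative blinfun_apply (Dphi u t)) (at u)"
    and dsphi_def: "\<forall>u t. ((\<lambda>s. phi s u t) has_vector_derivative dsphi u t) (at 0)"
begin

definition Dflow :: "real \<times> 'a \<times> real \<Rightarrow> (real \<times> 'a \<times> real) \<Rightarrow>\<^sub>L 'a" where
  "Dflow = (SOME D. (\<forall>x. ((\<lambda>(s, u, t). phi s u t) has_derivative blinfun_apply (D x)) (at x)) \<and> C1_map D)"

lemma has_derivative_Dflow: "((\<lambda>(s, u, t). phi s u t) has_derivative blinfun_apply (Dflow x)) (at x)"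
  and C1_map_Dflow: "C1_map Dflow"
  using someI_ex[OF phi_C2[unfolded C2_map_def]] unfolding Dflow_def by blast+

lemma has_derivative_flow_compose:
  assumes "(p has_derivative p') (at x)"
  shows "((\<lambda>x. phi (fst (p x)) (fst (snd (p x))) (snd (snd (p x)))) has_derivative (\<lambda>v. Dflow (p x) (p' v))) (at x)"
  using has_derivative_compose[OF assms has_derivative_Dflow] by (simp add: case_prod_beta)

lemma Dphi_eq_Dflow: "Dphi u t v = Dflow (0, u, t) (0, v, 0)"
proof -
  have "((\<lambda>x. (0::real, x, t)) has_derivative (\<lambda>v. (0, v, 0))) (at u)"
    by (auto intro!: derivative_eq_intros simp: zero_prod_def)
  from has_derivative_flow_compose[OF this]
  have "((\<lambda>x. phi 0 x t) has_derivative (\<lambda>v. Dflow (0, u, t) (0, v, 0))) (at u)" by simp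
  with Dphi_def have "blinfun_apply (Dphi u t) = (\<lambda>v. Dflow (0, u, t) (0, v, 0))"
    using has_derivative_unique by blast
  then show ?thesis by simp
qed

lemma dsphi_eq_Dflow: "dsphi u t = Dflow (0, u, t) (1, 0, 0)"
proof -
  have "((\<lambda>s. (s, u, t)) has_derivative (\<lambda>v. (v, 0, 0))) (at 0)"
    by (auto intro!: derivative_eq_intros simp: zero_prod_def)
  from has_derivative_flow_compose[OF this]
  have "((\<lambda>s. phi s u t) has_derivative (\<lambda>v. Dflow (0, u, t) (v, 0, 0))) (at 0)" by simp
  moreover have "((\<lambda>s. phi s u t) has_derivative (\<lambda>v. v *\<^sub>R dsphi u t)) (at 0)"
    using dsphi_def by (simp add: has_vector_derivative_def)
  ultimately have "(\<lambda>v. Dflow (0, u, t) (v, 0, 0)) = (\<lambda>v. v *\<^sub>R dsphi u t)"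
    using has_derivative_unique by blast
  from fun_cong[OF this, of 1] show ?thesis by simp
qed

lemma f_eq_Dflow: "f (phi s u t) s = Dflow (s, u, t) (0, 0, 1)"
proof -
  have "((\<lambda>t. (s, u, t)) has_derivative (\<lambda>v. (0, 0, v))) (at t)"
    by (auto intro!: derivative_eq_intros simp: zero_prod_def)
  from has_derivative_flow_compose[OF this]
  have "((\<lambda>t. phi s u t) has_derivative (\<lambda>v. Dflow (s, u, t) (0, 0, v))) (at t)" by simp
  moreover have "((\<lambda>t. phi s u t) has_derivative (\<lambda>v. v *\<^sub>R f (phi s u t) s)) (at t)"
    using phi_ode by (simp add: has_vector_derivative_def)
  ultimately have "(\<lambda>v. Dflow (s, u, t) (0, 0, v)) = (\<lambda>v. v *\<^sub>R f (phi s u t) s)"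
    using has_derivative_unique by blast
  from fun_cong[OF this, of 1] show ?thesis by simp
qed

lemma field_eq_Dflow: "f u 0 = Dflow (0, u, 0) (0, 0, 1)"
  using f_eq_Dflow[of 0 u 0] phi_init by simp

lemma continuous_on_field: "continuous_on UNIV (\<lambda>u. f u 0)"
  unfolding field_eq_Dflow
  by (intro continuous_intros continuous_on_compose2[OF C1_map_continuous[OF C1_map_Dflow]]) auto

lemma lipschitz_on_field: "\<exists>L. L-lipschitz_on (cball 0 r) (\<lambda>u. f u 0)"
proof -
  obtain L where L: "L-lipschitz_on (cball 0 r) Dflow"
    using C1_map_lipschitz_on_cball[OF C1_map_Dflow] by blast
  have "L-lipschitz_on (cball 0 r) (\<lambda>u. f u 0)"
  proof (rule lipschitz_onI)
    fix a b :: 'a assume "a \<in> cball 0 r" "b \<in> cball 0 r"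
    then have "norm (0::real, a, 0::real) \<le> r" "norm (0::real, b, 0::real) \<le> r"
      by (simp_all add: norm_Pair)
    then have "(0::real, a, 0::real) \<in> cball 0 r" "(0::real, b, 0::real) \<in> cball 0 r"
      by (simp_all only: mem_cball_0)
    then have "norm (Dflow (0, a, 0) - Dflow (0, b, 0)) \<le> L * norm ((0::real, a, 0::real) - (0, b, 0))"
      by (intro lipschitz_on_normD[OF L])
    moreover have "f a 0 - f b 0 = (Dflow (0, a, 0) - Dflow (0, b, 0)) (0, 0, 1)"
      by (simp add: field_eq_Dflow blinfun.diff_left)
    then have "norm (f a 0 - f b 0) \<le> norm (Dflow (0, a, 0) - Dflow (0, b, 0)) * norm (0::real, 0::'a, 1::real)"
      by (metis norm_blinfun)
    ultimately show "dist (f a 0) (f b 0) \<le> L * dist a b"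
      by (simp add: dist_norm norm_Pair)
  qed (use L lipschitz_on_nonneg in blast)
  then show ?thesis ..
qed

lemma flow_add: "phi 0 (phi 0 u a) b = phi 0 u (a + b)"
proof -
  have y: "((\<lambda>b. phi 0 (phi 0 u a) b) has_vector_derivative f (phi 0 (phi 0 u a) s) 0) (at s)" for s
    using phi_ode by blast
  have z: "((\<lambda>b. phi 0 u (a + b)) has_vector_derivative f (phi 0 u (a + s)) 0) (at s)" for s
  proof -
    have "((\<lambda>b. a + b) has_vector_derivative 1) (at s)"
      by (auto intro!: derivative_eq_intros)
    from vector_diff_chain_at[OF this, of "phi 0 u"] show ?thesis
      using phi_ode by (simp add: o_def)
  qed
  show ?thesis
    using autonomous_ode_unique[OF y z _ lipschitz_on_field] phi_init by simp
qed

lemma Dphi_add: "Dphi u (a + b) v = Dphi (phi 0 u a) b (Dphi u a v)"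
proof -
  have "((\<lambda>x. phi 0 x a) has_derivative blinfun_apply (Dphi u a)) (at u)"
    and "((\<lambda>x. phi 0 x b) has_derivative blinfun_apply (Dphi (phi 0 u a) b)) (at (phi 0 u a))"
    using Dphi_def by blast+
  from has_derivative_compose[OF this]
  have "((\<lambda>x. phi 0 (phi 0 x a) b) has_derivative (\<lambda>v. Dphi (phi 0 u a) b (Dphi u a v))) (at u)" .
  then have "((\<lambda>x. phi 0 x (a + b)) has_derivative (\<lambda>v. Dphi (phi 0 u a) b (Dphi u a v))) (at u)"
    by (simp add: flow_add)
  with Dphi_def have "blinfun_apply (Dphi u (a + b)) = (\<lambda>v. Dphi (phi 0 u a) b (Dphi u a v))"
    using has_derivative_unique by blast
  then show ?thesis by simp
qed

lemma Dphi_0: "Dphi u 0 v = v"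
proof -
  have "((\<lambda>x. phi 0 x 0) has_derivative (\<lambda>v. v)) (at u)"
    using phi_init by (simp add: has_derivative_ident)
  with Dphi_def have "blinfun_apply (Dphi u 0) = (\<lambda>v. v)"
    using has_derivative_unique by blast
  then show ?thesis by simp
qed

lemma Dphi_inverse: "Dphi (phi 0 u t) (- t) (Dphi u t v) = v"
  using Dphi_add[of u t "- t" v] Dphi_0 by simp

lemma Dphi_field: "Dphi u t (f u 0) = f (phi 0 u t) 0"
proof -
  have "((\<lambda>s. phi 0 u s) has_derivative (\<lambda>r. r *\<^sub>R f u 0)) (at 0)"
    using phi_ode[rule_format, of 0 u 0] phi_init by (simp add: has_vector_derivative_def)
  moreover have "((\<lambda>x. phi 0 x t) has_derivative blinfun_apply (Dphi u t)) (at (phi 0 u 0))"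
    using Dphi_def phi_init by simp
  ultimately have "((\<lambda>s. phi 0 (phi 0 u s) t) has_derivative (\<lambda>r. Dphi u t (r *\<^sub>R f u 0))) (at 0)"
    by (rule has_derivative_compose)
  then have "((\<lambda>s. phi 0 u (s + t)) has_vector_derivative Dphi u t (f u 0)) (at 0)"
    by (simp add: has_vector_derivative_def blinfun.scaleR_right flow_add)
  moreover have "((\<lambda>s. phi 0 u (s + t)) has_vector_derivative f (phi 0 u t) 0) (at 0)"
  proof -
    have "((\<lambda>s. s + t) has_vector_derivative 1) (at 0)"
      by (auto intro!: derivative_eq_intros)
    from vector_diff_chain_at[OF this, of "phi 0 u"] show ?thesis
      using phi_ode by (simp add: o_def)
  qed
  ultimately show ?thesis by (rule vector_derivative_unique_at)
qed

lemma dsphi_0: "dsphi u 0 = 0"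
proof -
  have "((\<lambda>s. phi s u 0) has_vector_derivative 0) (at 0)"
    using phi_init by simp
  then show ?thesis using vector_derivative_unique_at dsphi_def by blast
qed

lemma Dphi_bounded_on:
  assumes "compact K"
  shows "\<exists>B>0. \<forall>u\<in>K. \<forall>t\<in>{-1..1}. \<forall>v. norm (Dphi u t v) \<le> B * norm v"
proof -
  have "compact ((\<lambda>(u, t). (0::real, u, t)) ` (K \<times> {-1..1::real}))"
    by (intro compact_continuous_image compact_Times assms compact_Icc)
       (auto intro!: continuous_intros simp: case_prod_beta)
  then have "compact (Dflow ` (\<lambda>(u, t). (0::real, u, t)) ` (K \<times> {-1..1}))"
    by (rule compact_continuous_image[OF continuous_on_subset[OF C1_map_continuous[OF C1_map_Dflow]], rotated])
       simp
  then obtain B where B: "B > 0" "\<And>u t. u \<in> K \<Longrightarrow> t \<in> {-1..1} \<Longrightarrow> norm (Dflow (0, u, t)) \<le> B"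
    by (auto dest!: compact_imp_bounded simp: bounded_pos)
  have "norm (Dphi u t v) \<le> B * norm v" if "u \<in> K" "t \<in> {-1..1}" for u t v
    using norm_blinfun[of "Dflow (0, u, t)" "(0, v, 0)"] B(2)[OF that]
      mult_right_mono[of "norm (Dflow (0, u, t))" B "norm v"]
    by (simp add: Dphi_eq_Dflow norm_Pair)
  with B(1) show ?thesis by blast
qed

text \<open>Since \<open>dsphi u 0 = 0\<close>, the Lipschitz continuity of the total derivative of the flow
  gives \<open>dsphi u h = O(h)\<close>.\<close>

lemma dsphi_le_on:
  assumes "compact K"
  shows "\<exists>B>0. \<forall>u\<in>K. \<forall>h\<in>{0..1}. norm (dsphi u h) \<le> B * h"
proof -
  obtain R where R: "\<And>u. u \<in> K \<Longrightarrow> norm u \<le> R"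
    using compact_imp_bounded[OF assms] unfolding bounded_iff by blast
  obtain L where L: "L-lipschitz_on (cball 0 (R + 1)) Dflow"
    using C1_map_lipschitz_on_cball[OF C1_map_Dflow] by blast
  have "norm (dsphi u h) \<le> max L 1 * h" if u: "u \<in> K" and h: "h \<in> {0..1}" for u h
  proof -
    have "norm (0::real, u, h) \<le> R + 1" "norm (0::real, u, 0::real) \<le> R + 1"
      using R[OF u] h norm_Pair_le[of u h] by (auto simp: norm_Pair)
    then have "(0::real, u, h) \<in> cball 0 (R + 1)" "(0::real, u, 0::real) \<in> cball 0 (R + 1)"
      by (simp_all only: mem_cball_0)
    then have "norm (Dflow (0, u, h) - Dflow (0, u, 0)) \<le> L * norm ((0::real, u, h) - (0, u, 0))"
      by (intro lipschitz_on_normD[OF L])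
    then have lip: "norm (Dflow (0, u, h) - Dflow (0, u, 0)) \<le> L * h"
      using h by (simp add: norm_Pair)
    have "dsphi u h = dsphi u h - dsphi u 0" by (simp add: dsphi_0)
    also have "\<dots> = (Dflow (0, u, h) - Dflow (0, u, 0)) (1, 0, 0)"
      by (simp add: dsphi_eq_Dflow blinfun.diff_left)
    finally have "norm (dsphi u h) \<le> norm (Dflow (0, u, h) - Dflow (0, u, 0)) * norm ((1::real, 0::'a, 0::real))"
      by (metis norm_blinfun)
    moreover have "L * h \<le> max L 1 * h" using h by (intro mult_right_mono) auto
    ultimately show ?thesis using lip by (simp add: norm_Pair)
  qed
  then show ?thesis by (intro exI[of _ "max L 1"]) auto
qed

text \<open>Differentiating \<open>u\<^sup>s\<^sub>i\<^sub>+\<^sub>1 = \<phi>\<^sub>s(u\<^sup>s\<^sub>i, h \<tau>\<^sup>s\<^sub>i)\<close> at \<open>s = 0\<close>: the shadowing direction satisfies the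
  constraint of the least squares shadowing problem.\<close>

lemma shadowing_direction_variational_eq:
  assumes "shadowing_direction phi h u vinf etainf"
  shows "vinf (i + 1) = Dphi (u i) h (vinf i) + dsphi (u i) h + (h * etainf i) *\<^sub>R f (phi 0 (u i) h) 0"
proof -
  obtain eps us taus dus dtaus where eps: "eps > 0"
    and us0: "us 0 = u" and taus0: "taus 0 = (\<lambda>i. 1)"
    and rec: "\<forall>s i. \<bar>s\<bar> < eps \<longrightarrow> us s i = phi s (us s (i - 1)) (h * taus s (i - 1))"
    and dus: "\<forall>s i. \<bar>s\<bar> < eps \<longrightarrow> ((\<lambda>r. us r i) has_vector_derivative dus s i) (at s)"
    and dtaus: "\<forall>s i. \<bar>s\<bar> < eps \<longrightarrow> ((\<lambda>r. taus r i) has_real_derivative dtaus s i) (at s)"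
    and vinf: "vinf = dus 0" and etainf: "etainf = dtaus 0"
    using assms unfolding shadowing_direction_def by blast
  let ?D = "\<lambda>r. (r, r *\<^sub>R vinf i, h * (etainf i * r))"
  have "((\<lambda>r. us r i) has_derivative (\<lambda>r. r *\<^sub>R vinf i)) (at 0)"
    using dus eps unfolding vinf has_vector_derivative_def by simp
  moreover have "((\<lambda>r. h * taus r i) has_derivative (\<lambda>r. h * (etainf i * r))) (at 0)"
    using dtaus eps unfolding etainf
    by (auto intro!: derivative_eq_intros has_field_derivative_imp_has_derivative)
  ultimately have "((\<lambda>r. (r, us r i, h * taus r i)) has_derivative ?D) (at 0)"
    by (intro has_derivative_Pair has_derivative_ident)
  from has_derivative_flow_compose[OF this]
  have "((\<lambda>r. phi r (us r i) (h * taus r i)) has_derivative (\<lambda>r. Dflow (0, u i, h) (?D r))) (at 0)"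
    using us0 taus0 by simp
  then have "((\<lambda>r. us r (i + 1)) has_derivative (\<lambda>r. Dflow (0, u i, h) (?D r))) (at 0)"
  proof (rule has_derivative_transform_within_open[OF _ open_ball[of 0 eps]])
    show "(0::real) \<in> ball 0 eps" using eps by simp
    fix r :: real assume "r \<in> ball 0 eps"
    then have "\<bar>r\<bar> < eps" by (simp add: dist_norm)
    then show "phi r (us r i) (h * taus r i) = us r (i + 1)"
      using rec[rule_format, of r "i + 1"] by simp
  qed
  moreover have "((\<lambda>r. us r (i + 1)) has_derivative (\<lambda>r. r *\<^sub>R vinf (i + 1))) (at 0)"
    using dus eps unfolding vinf has_vector_derivative_def by simp
  ultimately have "(\<lambda>r. r *\<^sub>R vinf (i + 1)) = (\<lambda>r. Dflow (0, u i, h) (?D r))"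
    by (rule has_derivative_unique[rotated])
  from fun_cong[OF this, of 1] have "vinf (i + 1) = Dflow (0, u i, h) (?D 1)" by simp
  also have "?D 1 = (1, 0, 0) + (0, vinf i, 0) + (h * etainf i) *\<^sub>R (0, 0, 1)"
    by simp
  finally show ?thesis
    unfolding dsphi_eq_Dflow Dphi_eq_Dflow f_eq_Dflow
    by (simp only: blinfun.add_right blinfun.scaleR_right add_ac)
qed

lemma shadowing_direction_bounded:
  assumes "shadowing_direction phi h u vinf etainf"
  shows "\<exists>B. \<forall>i. norm (vinf i) \<le> B"
  using assms unfolding shadowing_direction_def
proof (elim exE conjE)
  fix eps B :: real and us taus dus dtaus
  assume "eps > 0" "vinf = dus 0" "\<forall>s i. \<bar>s\<bar> < eps \<longrightarrow> norm (dus s i) \<le> B \<and> \<bar>dtaus s i\<bar> \<le> B"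
  then have "norm (vinf i) \<le> B" for i by force
  then show ?thesis by blast
qed

end

section \<open>The hyperbolic splitting\<close>

locale hyperbolic_flow = C2_flow f phi Dphi dsphi
  for f :: "'a::euclidean_space \<Rightarrow> real \<Rightarrow> 'a" and phi Dphi dsphi +
  fixes Lambda :: "'a set" and C lam :: real and Vp Vm :: "'a \<Rightarrow> 'a set"
  assumes Lambda_compact: "compact Lambda"
    and Lambda_inv: "\<forall>u\<in>Lambda. \<forall>t. phi 0 u t \<in> Lambda"
    and lam: "0 < lam" "lam < 1"
    and hyp: "hyperbolic_splitting f phi Dphi Lambda C lam Vp Vm"
begin

lemma subspace_Vp: "u \<in> Lambda \<Longrightarrow> subspace (Vp u)"
  and subspace_Vm: "u \<in> Lambda \<Longrightarrow> subspace (Vm u)"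
  using hyp unfolding hyperbolic_splitting_def by blast+

lemma V0_eq: "V0 f u = range (\<lambda>c. c *\<^sub>R f u 0)"
  unfolding V0_def by (simp add: span_singleton)

lemma subspace_V0: "subspace (V0 f u)"
  unfolding V0_def by (rule subspace_span)

lemma Dphi_V0: "c \<in> V0 f u \<Longrightarrow> Dphi u t c \<in> V0 f (phi 0 u t)"
  unfolding V0_eq using Dphi_field by (auto simp: blinfun.scaleR_right)

lemma Dphi_Vp: "u \<in> Lambda \<Longrightarrow> a \<in> Vp u \<Longrightarrow> Dphi u t a \<in> Vp (phi 0 u t)"
  and Dphi_Vm: "u \<in> Lambda \<Longrightarrow> a \<in> Vm u \<Longrightarrow> Dphi u t a \<in> Vm (phi 0 u t)"
  using hyp unfolding hyperbolic_splitting_def by blast+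

lemma splitting_unique:
  assumes "u \<in> Lambda" "a \<in> Vp u" "b \<in> Vm u" "c \<in> V0 f u" "a' \<in> Vp u" "b' \<in> Vm u" "c' \<in> V0 f u"
    and "a + b + c = a' + b' + c'"
  shows "a = a' \<and> b = b' \<and> c = c'"
proof -
  have "a - a' \<in> Vp u" "b - b' \<in> Vm u" "c - c' \<in> V0 f u"
    using assms subspace_Vp subspace_Vm subspace_V0 by (auto intro: subspace_diff)
  moreover have "(a - a') + (b - b') + (c - c') = 0" using assms(8) by (simp add: algebra_simps)
  ultimately have "a - a' = 0 \<and> b - b' = 0 \<and> c - c' = 0"
    using hyp assms(1) unfolding hyperbolic_splitting_def by blast
  then show ?thesis by simp
qed

text \<open>The splitting comes with continuous projections; we only use them to bound the
  components uniformly, and work with the components defined intrinsically.\<close>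

lemma continuous_projections:
  obtains Qp Qm Q0 :: "'a \<Rightarrow> 'a \<Rightarrow> 'a" where
    "\<And>v. continuous_on Lambda (\<lambda>u. Qp u v)" "\<And>v. continuous_on Lambda (\<lambda>u. Qm u v)"
    "\<And>v. continuous_on Lambda (\<lambda>u. Q0 u v)"
    "\<And>u v. u \<in> Lambda \<Longrightarrow> Qp u v \<in> Vp u \<and> Qm u v \<in> Vm u \<and> Q0 u v \<in> V0 f u \<and> v = Qp u v + Qm u v + Q0 u v"
proof -
  note hyp[unfolded hyperbolic_splitting_def]
  from conjunct1[OF conjunct2[OF conjunct2[OF this]]] show ?thesis
  proof (elim exE conjE)
    fix Qp Qm :: "'a \<Rightarrow> 'a \<Rightarrow> 'a" and Q0 :: "'a \<Rightarrow> 'a \<Rightarrow>\<^sub>L 'a"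
    assume cont: "continuous_on Lambda Qp" "continuous_on Lambda Qm" "continuous_on Lambda (\<lambda>u. blinfun_apply (Q0 u))"
      and split: "\<forall>u\<in>Lambda. \<forall>v. Qp u v \<in> Vp u \<and> Qm u v \<in> Vm u \<and> Q0 u v \<in> V0 f u \<and> v = Qp u v + Qm u v + Q0 u v"
    show ?thesis
    proof (rule that[of Qp Qm "\<lambda>u v. Q0 u v"])
      show "continuous_on Lambda (\<lambda>u. Qp u v)" "continuous_on Lambda (\<lambda>u. Qm u v)"
        "continuous_on Lambda (\<lambda>u. Q0 u v)" for v
        using cont continuous_on_product_then_coordinatewise[OF cont(3)]
        by (simp_all add: continuous_on_product_then_coordinatewise)
      show "Qp u v \<in> Vp u \<and> Qm u v \<in> Vm u \<and> Q0 u v \<in> V0 f u \<and> v = Qp u v + Qm u v + Q0 u v"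
        if "u \<in> Lambda" for u v
        using split that by blast
    qed
  qed
qed

definition components :: "'a \<Rightarrow> 'a \<Rightarrow> 'a \<times> 'a \<times> 'a" where
  "components u v = (THE (a, b, c). a \<in> Vp u \<and> b \<in> Vm u \<and> c \<in> V0 f u \<and> v = a + b + c)"

abbreviation Pp :: "'a \<Rightarrow> 'a \<Rightarrow> 'a" where "Pp u v \<equiv> fst (components u v)"
abbreviation Pm :: "'a \<Rightarrow> 'a \<Rightarrow> 'a" where "Pm u v \<equiv> fst (snd (components u v))"
abbreviation P0 :: "'a \<Rightarrow> 'a \<Rightarrow> 'a" where "P0 u v \<equiv> snd (snd (components u v))"

lemma components_eqI:
  assumes "u \<in> Lambda" "a \<in> Vp u" "b \<in> Vm u" "c \<in> V0 f u" "v = a + b + c"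
  shows "components u v = (a, b, c)"
  unfolding components_def
proof (rule the_equality)
  show "case (a, b, c) of (a, b, c) \<Rightarrow> a \<in> Vp u \<and> b \<in> Vm u \<and> c \<in> V0 f u \<and> v = a + b + c"
    using assms by simp
  fix x assume "case x of (a, b, c) \<Rightarrow> a \<in> Vp u \<and> b \<in> Vm u \<and> c \<in> V0 f u \<and> v = a + b + c"
  then show "x = (a, b, c)"
    using splitting_unique[OF assms(1) _ _ _ assms(2-4)] assms(5) by (auto split: prod.splits)
qed

lemma splitting_components_eq:
  assumes "u \<in> Lambda" "a \<in> Vp u" "b \<in> Vm u" "c \<in> V0 f u" "v = a + b + c"
  shows "Pp u v = a \<and> Pm u v = b \<and> P0 u v = c"
  using components_eqI[OF assms] by simp

lemma splitting_components:
  assumes "u \<in> Lambda"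
  shows "Pp u v \<in> Vp u \<and> Pm u v \<in> Vm u \<and> P0 u v \<in> V0 f u \<and> v = Pp u v + Pm u v + P0 u v"
proof -
  obtain Qp Qm Q0 where
    "\<And>v. continuous_on Lambda (\<lambda>u. Qp u v)" "\<And>v. continuous_on Lambda (\<lambda>u. Qm u v)"
    "\<And>v. continuous_on Lambda (\<lambda>u. Q0 u v)"
    and Q: "\<And>u v. u \<in> Lambda \<Longrightarrow> Qp u v \<in> Vp u \<and> Qm u v \<in> Vm u \<and> Q0 u v \<in> V0 f u \<and> v = Qp u v + Qm u v + Q0 u v"
    by (rule continuous_projections) (rule that; assumption)
  have "components u v = (Qp u v, Qm u v, Q0 u v)"
    using Q[OF assms, of v] by (intro components_eqI[OF assms]) auto
  then show ?thesis using Q[OF assms, of v] by simp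
qed

lemma linear_components:
  assumes u: "u \<in> Lambda"
  shows "linear (Pp u)" "linear (Pm u)" "linear (P0 u)"
proof -
  note P = splitting_components[OF u]
  have sum: "Pp u x + Pm u x + P0 u x = x" for x using P by simp
  have add: "Pp u (x + y) = Pp u x + Pp u y \<and> Pm u (x + y) = Pm u x + Pm u y \<and> P0 u (x + y) = P0 u x + P0 u y" for x y
  proof (rule splitting_components_eq[OF u])
    show "Pp u x + Pp u y \<in> Vp u" "Pm u x + Pm u y \<in> Vm u" "P0 u x + P0 u y \<in> V0 f u"
      using P subspace_Vp[OF u] subspace_Vm[OF u] subspace_V0 by (auto intro: subspace_add)
    have "x + y = (Pp u x + Pm u x + P0 u x) + (Pp u y + Pm u y + P0 u y)"
      by (simp only: sum)
    then show "x + y = Pp u x + Pp u y + (Pm u x + Pm u y) + (P0 u x + P0 u y)"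
      by (simp add: algebra_simps)
  qed
  have scale: "Pp u (r *\<^sub>R x) = r *\<^sub>R Pp u x \<and> Pm u (r *\<^sub>R x) = r *\<^sub>R Pm u x \<and> P0 u (r *\<^sub>R x) = r *\<^sub>R P0 u x" for r x
  proof (rule splitting_components_eq[OF u])
    show "r *\<^sub>R Pp u x \<in> Vp u" "r *\<^sub>R Pm u x \<in> Vm u" "r *\<^sub>R P0 u x \<in> V0 f u"
      using P subspace_Vp[OF u] subspace_Vm[OF u] subspace_V0 by (auto intro: subspace_scale)
    have "r *\<^sub>R x = r *\<^sub>R (Pp u x + Pm u x + P0 u x)"
      by (simp only: sum)
    then show "r *\<^sub>R x = r *\<^sub>R Pp u x + r *\<^sub>R Pm u x + r *\<^sub>R P0 u x"
      by (simp add: algebra_simps)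
  qed
  show "linear (Pp u)" "linear (Pm u)" "linear (P0 u)"
    using add scale by (auto intro!: linearI)
qed

lemma continuous_on_components:
  "continuous_on Lambda (\<lambda>u. Pp u v)" "continuous_on Lambda (\<lambda>u. Pm u v)"
  "continuous_on Lambda (\<lambda>u. P0 u v)"
proof -
  obtain Qp Qm Q0 where cont:
    "\<And>v. continuous_on Lambda (\<lambda>u. Qp u v)" "\<And>v. continuous_on Lambda (\<lambda>u. Qm u v)"
    "\<And>v. continuous_on Lambda (\<lambda>u. Q0 u v)"
    and Q: "\<And>u v. u \<in> Lambda \<Longrightarrow> Qp u v \<in> Vp u \<and> Qm u v \<in> Vm u \<and> Q0 u v \<in> V0 f u \<and> v = Qp u v + Qm u v + Q0 u v"
    by (rule continuous_projections) (rule that; assumption)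
  have "components u v = (Qp u v, Qm u v, Q0 u v)" if "u \<in> Lambda" for u
    using Q[OF that, of v] by (intro components_eqI[OF that]) auto
  then show "continuous_on Lambda (\<lambda>u. Pp u v)" "continuous_on Lambda (\<lambda>u. Pm u v)"
    "continuous_on Lambda (\<lambda>u. P0 u v)"
    using cont by (simp_all cong: continuous_on_cong)
qed

lemma components_bounded:
  "\<exists>B>0. \<forall>u\<in>Lambda. \<forall>v. norm (Pp u v) \<le> B * norm v \<and> norm (Pm u v) \<le> B * norm v \<and> norm (P0 u v) \<le> B * norm v"
proof -
  obtain B1 B2 B3 where pos: "B1 > 0" "B2 > 0" "B3 > 0"
    and bounds: "\<forall>u\<in>Lambda. \<forall>v. norm (Pp u v) \<le> B1 * norm v"
    "\<forall>u\<in>Lambda. \<forall>v. norm (Pm u v) \<le> B2 * norm v"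
    "\<forall>u\<in>Lambda. \<forall>v. norm (P0 u v) \<le> B3 * norm v"
    using uniformly_bounded_linear_family[OF Lambda_compact continuous_on_components(1) linear_components(1)]
      uniformly_bounded_linear_family[OF Lambda_compact continuous_on_components(2) linear_components(2)]
      uniformly_bounded_linear_family[OF Lambda_compact continuous_on_components(3) linear_components(3)]
    by metis
  have "norm (Pp u v) \<le> (B1 + B2 + B3) * norm v \<and> norm (Pm u v) \<le> (B1 + B2 + B3) * norm v \<and>
      norm (P0 u v) \<le> (B1 + B2 + B3) * norm v" if "u \<in> Lambda" for u v
  proof -
    have "B1 * norm v \<le> (B1 + B2 + B3) * norm v" "B2 * norm v \<le> (B1 + B2 + B3) * norm v"
      "B3 * norm v \<le> (B1 + B2 + B3) * norm v"
      using pos by (simp_all add: mult_right_mono)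
    then show ?thesis
      using bounds(1)[rule_format, OF that, of v] bounds(2)[rule_format, OF that, of v]
        bounds(3)[rule_format, OF that, of v]
      by linarith
  qed
  with pos show ?thesis by (intro exI[of _ "B1 + B2 + B3"]) auto
qed

definition P_bound :: real where
  "P_bound = (SOME B. B > 0 \<and> (\<forall>u\<in>Lambda. \<forall>v. norm (Pp u v) \<le> B * norm v \<and>
                                  norm (Pm u v) \<le> B * norm v \<and> norm (P0 u v) \<le> B * norm v))"

lemma P_bound_pos: "P_bound > 0"
  and norm_Pp_le: "u \<in> Lambda \<Longrightarrow> norm (Pp u v) \<le> P_bound * norm v"
  and norm_Pm_le: "u \<in> Lambda \<Longrightarrow> norm (Pm u v) \<le> P_bound * norm v"
  and norm_P0_le: "u \<in> Lambda \<Longrightarrow> norm (P0 u v) \<le> P_bound * norm v"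
  using someI_ex[OF components_bounded] unfolding P_bound_def[symmetric] by blast+

definition Ch :: real where "Ch = max C 1"

lemma Ch_ge_1: "1 \<le> Ch"
  unfolding Ch_def by simp

lemma norm_Dphi_Vp_le:
  assumes "u \<in> Lambda" "v \<in> Vp u" "t \<le> 0"
  shows "norm (Dphi u t v) \<le> Ch * lam powr (- t) * norm v"
proof (cases "t = 0")
  case True
  then show ?thesis using Ch_ge_1 lam by (simp add: Dphi_0 mult_le_cancel_right1)
next
  case False
  then have "norm (Dphi u t v) \<le> C * lam powr (- t) * norm v"
    using hyp assms unfolding hyperbolic_splitting_def by simp
  also have "\<dots> \<le> Ch * lam powr (- t) * norm v"
    unfolding Ch_def by (intro mult_right_mono) auto
  finally show ?thesis .
qed

lemma norm_Dphi_Vm_le: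
  assumes "u \<in> Lambda" "v \<in> Vm u" "0 \<le> t"
  shows "norm (Dphi u t v) \<le> Ch * lam powr t * norm v"
proof (cases "t = 0")
  case True
  then show ?thesis using Ch_ge_1 lam by (simp add: Dphi_0 mult_le_cancel_right1)
next
  case False
  then have "norm (Dphi u t v) \<le> C * lam powr t * norm v"
    using hyp assms unfolding hyperbolic_splitting_def by simp
  also have "\<dots> \<le> Ch * lam powr t * norm v"
    unfolding Ch_def by (intro mult_right_mono) auto
  finally show ?thesis .
qed

lemma sum_norm_P0_Basis_ge_1:
  assumes w: "w \<in> Lambda" and F: "f w 0 \<noteq> 0"
  shows "1 \<le> (\<Sum>b\<in>Basis. norm (P0 w b))"
proof -
  interpret linear "P0 w" using linear_components(3)[OF w] .
  have "f w 0 \<in> V0 f w" unfolding V0_def by (simp add: span_base)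
  then have "P0 w (f w 0) = f w 0"
    using splitting_components_eq[OF w, of 0 0 "f w 0" "f w 0"]
      subspace_0[OF subspace_Vp[OF w]] subspace_0[OF subspace_Vm[OF w]]
    by simp
  also have "P0 w (f w 0) = (\<Sum>b\<in>Basis. (f w 0 \<bullet> b) *\<^sub>R P0 w b)"
    by (subst euclidean_representation[symmetric, of "f w 0"]) (simp add: sum scale)
  finally have "norm (f w 0) \<le> (\<Sum>b\<in>Basis. norm ((f w 0 \<bullet> b) *\<^sub>R P0 w b))"
    by (metis norm_sum)
  also have "\<dots> \<le> (\<Sum>b\<in>Basis. norm (f w 0) * norm (P0 w b))"
    by (intro sum_mono) (simp add: Basis_le_norm mult_right_mono)
  finally show ?thesis using F by (simp add: sum_distrib_left[symmetric])
qed

text \<open>The points of \<open>Lambda\<close> where the vector field does not vanish form the compact set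
  where the continuous function \<open>\<Sum>\<^sub>b |P0 w b|\<close> is at least \<open>1\<close>.\<close>

lemma field_norm_bounded_below: "\<exists>d>0. \<forall>w\<in>Lambda. f w 0 \<noteq> 0 \<longrightarrow> d \<le> norm (f w 0)"
proof -
  define q where "q w = (\<Sum>b\<in>Basis. norm (P0 w b))" for w
  define S where "S = Lambda \<inter> q -` {1..}"
  have "continuous_on Lambda q"
    unfolding q_def by (intro continuous_on_sum continuous_on_norm continuous_on_components(3))
  then have "compact S"
    unfolding S_def using Lambda_compact
    by (metis closed_atLeast compact_Int_closed continuous_closed_preimage compact_imp_closed inf.idem
        inf_assoc)
  have "q w = 0" if "w \<in> Lambda" "f w 0 = 0" for w
    using splitting_components[OF that(1)] unfolding q_def V0_eq that(2) by simp
  then have S: "w \<in> S \<longleftrightarrow> w \<in> Lambda \<and> f w 0 \<noteq> 0" for w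
    using sum_norm_P0_Basis_ge_1 unfolding S_def q_def by fastforce
  show ?thesis
  proof (cases "S = {}")
    case True
    then show ?thesis using S by (auto intro!: exI[of _ 1])
  next
    case False
    have "continuous_on S (\<lambda>w. norm (f w 0))"
      using continuous_on_field by (intro continuous_intros) (auto intro: continuous_on_subset)
    then obtain w0 where "w0 \<in> S" "\<forall>w\<in>S. norm (f w0 0) \<le> norm (f w 0)"
      using continuous_attains_inf[OF \<open>compact S\<close> False] by blast
    with S show ?thesis by (intro exI[of _ "norm (f w0 0)"]) auto
  qed
qed

lemma neutral_coefficient_bounded:
  "\<exists>K>0. \<forall>w\<in>Lambda. \<forall>x. \<exists>c. P0 w x = c *\<^sub>R f w 0 \<and> \<bar>c\<bar> \<le> K * norm x"
proof -
  obtain d where d: "d > 0" "\<And>w. w \<in> Lambda \<Longrightarrow> f w 0 \<noteq> 0 \<Longrightarrow> d \<le> norm (f w 0)"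
    using field_norm_bounded_below by blast
  have "\<exists>c. P0 w x = c *\<^sub>R f w 0 \<and> \<bar>c\<bar> \<le> P_bound / d * norm x" if w: "w \<in> Lambda" for w x
  proof -
    obtain c where c: "P0 w x = c *\<^sub>R f w 0"
      using splitting_components[OF w, of x] unfolding V0_eq by blast
    show ?thesis
    proof (cases "f w 0 = 0")
      case True
      then show ?thesis using c d P_bound_pos by (intro exI[of _ 0]) auto
    next
      case False
      have "\<bar>c\<bar> * d \<le> \<bar>c\<bar> * norm (f w 0)" using d w False by (simp add: mult_left_mono)
      also have "\<dots> = norm (P0 w x)" using c by simp
      also have "\<dots> \<le> P_bound * norm x" by (rule norm_P0_le[OF w])
      finally show ?thesis using c d(1) by (intro exI[of _ c]) (simp add: field_simps)
    qed
  qed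
  moreover have "P_bound / d > 0" using P_bound_pos d by simp
  ultimately show ?thesis by blast
qed

definition coef_bound :: real where
  "coef_bound = (SOME K. K > 0 \<and> (\<forall>w\<in>Lambda. \<forall>x. \<exists>c. P0 w x = c *\<^sub>R f w 0 \<and> \<bar>c\<bar> \<le> K * norm x))"

lemma coef_bound_pos: "coef_bound > 0"
  and P0_eq_scaleR_field: "w \<in> Lambda \<Longrightarrow> \<exists>c. P0 w x = c *\<^sub>R f w 0 \<and> \<bar>c\<bar> \<le> coef_bound * norm x"
  using someI_ex[OF neutral_coefficient_bounded] unfolding coef_bound_def[symmetric] by blast+

definition Dphi_bound :: real where
  "Dphi_bound = (SOME B. B > 0 \<and> (\<forall>u\<in>Lambda. \<forall>t\<in>{-1..1}. \<forall>v. norm (Dphi u t v) \<le> B * norm v))"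

lemma Dphi_bound_pos: "Dphi_bound > 0"
  and norm_Dphi_le: "u \<in> Lambda \<Longrightarrow> t \<in> {-1..1} \<Longrightarrow> norm (Dphi u t v) \<le> Dphi_bound * norm v"
  using someI_ex[OF Dphi_bounded_on[OF Lambda_compact]] unfolding Dphi_bound_def[symmetric] by blast+

definition dsphi_bound :: real where
  "dsphi_bound = (SOME B. B > 0 \<and> (\<forall>u\<in>Lambda. \<forall>h\<in>{0..1}. norm (dsphi u h) \<le> B * h))"

lemma dsphi_bound_pos: "dsphi_bound > 0"
  and norm_dsphi_le: "u \<in> Lambda \<Longrightarrow> h \<in> {0..1} \<Longrightarrow> norm (dsphi u h) \<le> dsphi_bound * h"
  using someI_ex[OF dsphi_le_on[OF Lambda_compact]] unfolding dsphi_bound_def[symmetric] by blast+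

lemma components_Dphi_step:
  assumes u: "u \<in> Lambda" and x': "x' = Dphi u h x + r + c *\<^sub>R f (phi 0 u h) 0"
  shows "Pp (phi 0 u h) x' = Dphi u h (Pp u x) + Pp (phi 0 u h) r \<and>
         Pm (phi 0 u h) x' = Dphi u h (Pm u x) + Pm (phi 0 u h) r"
proof -
  let ?u = "phi 0 u h"
  have u': "?u \<in> Lambda" using Lambda_inv u by blast
  note P = splitting_components[OF u, of x] splitting_components[OF u', of r]
  have "x' = (Dphi u h (Pp u x) + Pp ?u r) + (Dphi u h (Pm u x) + Pm ?u r)
            + (Dphi u h (P0 u x) + P0 ?u r + c *\<^sub>R f ?u 0)"
  proof -
    have "Dphi u h x = Dphi u h (Pp u x) + Dphi u h (Pm u x) + Dphi u h (P0 u x)"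
      using P by (metis blinfun.add_right)
    then show ?thesis using x' P by (simp add: algebra_simps)
  qed
  moreover have "Dphi u h (Pp u x) + Pp ?u r \<in> Vp ?u"
    using Dphi_Vp[OF u] P subspace_Vp[OF u'] by (simp add: subspace_add)
  moreover have "Dphi u h (Pm u x) + Pm ?u r \<in> Vm ?u"
    using Dphi_Vm[OF u] P subspace_Vm[OF u'] by (simp add: subspace_add)
  moreover have "Dphi u h (P0 u x) + P0 ?u r + c *\<^sub>R f ?u 0 \<in> V0 f ?u"
    using Dphi_V0 P subspace_V0 by (simp add: subspace_add subspace_scale V0_def span_base)
  ultimately show ?thesis using splitting_components_eq[OF u'] by blast
qed

definition rate :: real where "rate = - ln lam"

lemma rate_pos: "0 < rate"
  unfolding rate_def using lam by simp

lemma lam_powr_eq_exp: "lam powr t = exp (- (rate * t))"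
  unfolding rate_def powr_def using lam by simp

lemma lam_powr_bounds: "0 < t \<Longrightarrow> 0 < lam powr t \<and> lam powr t < 1"
  using lam powr_less_mono2[of t lam 1] by simp

lemma lam_powr_of_nat_mult: "lam powr (real k * t) = (lam powr t) ^ k"
  using lam by (simp add: powr_realpow[symmetric] powr_powr mult.commute)

lemma step_ratio_le:
  assumes "0 < h" "h * rate \<le> 1"
  shows "h / (1 - lam powr h) \<le> 2 / rate"
proof -
  have "h * rate / (1 - exp (- (h * rate))) \<le> 2"
    using assms rate_pos by (intro div_one_minus_exp_neg_le) auto
  moreover have "exp (- (h * rate)) = lam powr h" by (simp add: lam_powr_eq_exp mult.commute)
  ultimately show ?thesis
    using assms rate_pos lam_powr_bounds[OF assms(1)] by (simp add: field_simps)
qed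

definition shadow_bound :: real where
  "shadow_bound = Ch * P_bound * dsphi_bound * (2 / rate)"

lemma shadow_bound_pos: "0 < shadow_bound"
  unfolding shadow_bound_def using Ch_ge_1 P_bound_pos dsphi_bound_pos rate_pos by simp

definition competitor_cost :: "real \<Rightarrow> real" where
  "competitor_cost alpha = (2 * shadow_bound)\<^sup>2 + alpha * (coef_bound * dsphi_bound)\<^sup>2"

lemma competitor_cost_nonneg: "0 \<le> alpha \<Longrightarrow> 0 \<le> competitor_cost alpha"
  unfolding competitor_cost_def by simp

definition endpoint_bound :: "real \<Rightarrow> real \<Rightarrow> real" where
  "endpoint_bound alpha T = Dphi_bound * (P_bound * sqrt (T * competitor_cost alpha) + shadow_bound)"

lemma endpoint_bound_pos:
  assumes "0 \<le> alpha" "0 \<le> T"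
  shows "0 < endpoint_bound alpha T"
  unfolding endpoint_bound_def using Dphi_bound_pos P_bound_pos shadow_bound_pos competitor_cost_nonneg[OF assms(1)] assms(2)
  by (intro mult_pos_pos add_nonneg_pos mult_nonneg_nonneg) auto

lemma endpoint_bound_le_sqrt:
  assumes "0 \<le> alpha" "1 \<le> T"
  shows "endpoint_bound alpha T \<le> endpoint_bound alpha 1 * sqrt T"
proof -
  have "shadow_bound \<le> shadow_bound * sqrt T"
    using assms shadow_bound_pos by (simp add: mult_le_cancel_left1)
  then have "P_bound * sqrt (T * competitor_cost alpha) + shadow_bound
      \<le> (P_bound * sqrt (competitor_cost alpha) + shadow_bound) * sqrt T"
    by (simp add: real_sqrt_mult algebra_simps)
  then show ?thesis
    unfolding endpoint_bound_def using Dphi_bound_pos by (simp add: mult_left_mono mult.assoc)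
qed

lemma endpoint_bound_div_le:
  assumes "0 \<le> alpha" "1 \<le> T" "0 \<le> c"
  shows "c * endpoint_bound alpha T / T \<le> c * endpoint_bound alpha 1 / sqrt T"
proof -
  have "c * endpoint_bound alpha T / T \<le> c * (endpoint_bound alpha 1 * sqrt T) / T"
    using endpoint_bound_le_sqrt[OF assms(1,2)] assms by (intro divide_right_mono mult_left_mono) auto
  also have "\<dots> = c * endpoint_bound alpha 1 / sqrt T"
    using assms(2) by (simp add: field_simps real_sqrt_mult[symmetric])
  finally show ?thesis .
qed

end

section \<open>Linearized recurrences along a sampled orbit\<close>

locale sampled_orbit = hyperbolic_flow f phi Dphi dsphi Lambda C lam Vp Vm
  for f :: "'a::euclidean_space \<Rightarrow> real \<Rightarrow> 'a" and phi Dphi dsphi Lambda C lam Vp Vm +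
  fixes u0 :: 'a and h :: real
  assumes u0_in: "u0 \<in> Lambda" and h_pos: "0 < h"
begin

definition orbit :: "int \<Rightarrow> 'a" where "orbit i = phi 0 u0 (real_of_int i * h)"

lemma orbit_in: "orbit i \<in> Lambda"
  unfolding orbit_def using Lambda_inv u0_in by blast

lemma orbit_shift: "phi 0 (orbit i) (real k * h) = orbit (i + int k)"
  unfolding orbit_def flow_add by (simp add: algebra_simps)

lemma orbit_step: "phi 0 (orbit i) h = orbit (i + 1)"
  using orbit_shift[of i 1] by simp

lemma Dphi_orbit_add:
  "Dphi (orbit (i + int k)) t (Dphi (orbit i) (real k * h) v) = Dphi (orbit i) (real k * h + t) v"
  using Dphi_add[of "orbit i" "real k * h" t v] by (simp add: orbit_shift)

lemma forced_recurrence_forward: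
  assumes "\<And>j. i \<le> j \<Longrightarrow> j < i + int k \<Longrightarrow> w (j + 1) = Dphi (orbit j) h (w j) + r j"
  shows "w (i + int k) = Dphi (orbit i) (real k * h) (w i)
           + (\<Sum>j<k. Dphi (orbit (i + int j + 1)) (real (k - 1 - j) * h) (r (i + int j)))"
  using assms
proof (induction k)
  case 0
  then show ?case by (simp add: Dphi_0)
next
  case (Suc k)
  have propagate: "Dphi (orbit (i + int k)) h (Dphi (orbit (i + int j + 1)) (real (k - 1 - j) * h) x)
      = Dphi (orbit (i + int j + 1)) (real (Suc k - 1 - j) * h) x" if "j < k" for j x
    using Dphi_orbit_add[of "i + int j + 1" "k - 1 - j" h x] that
    by (simp add: of_nat_diff algebra_simps)
  have "w (i + int (Suc k)) = Dphi (orbit (i + int k)) h (w (i + int k)) + r (i + int k)"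
    using Suc.prems[of "i + int k"] by (simp add: ac_simps)
  also have "\<dots> = Dphi (orbit i) (real (Suc k) * h) (w i)
      + (\<Sum>j<k. Dphi (orbit (i + int j + 1)) (real (Suc k - 1 - j) * h) (r (i + int j))) + r (i + int k)"
    using Suc propagate Dphi_orbit_add[of i k h "w i"]
    by (simp add: blinfun.add_right blinfun.sum_right algebra_simps)
  also have "\<dots> = Dphi (orbit i) (real (Suc k) * h) (w i)
      + (\<Sum>j<Suc k. Dphi (orbit (i + int j + 1)) (real (Suc k - 1 - j) * h) (r (i + int j)))"
    by (simp add: Dphi_0)
  finally show ?case .
qed

lemma forced_recurrence_backward:
  assumes "\<And>j. i \<le> j \<Longrightarrow> j < i + int k \<Longrightarrow> w (j + 1) = Dphi (orbit j) h (w j) + r j"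
  shows "w i = Dphi (orbit (i + int k)) (- (real k * h)) (w (i + int k))
           - (\<Sum>j<k. Dphi (orbit (i + int j + 1)) (- (real (Suc j) * h)) (r (i + int j)))"
proof -
  have F: "w (i + int k) = Dphi (orbit i) (real k * h) (w i)
           + (\<Sum>j<k. Dphi (orbit (i + int j + 1)) (real (k - 1 - j) * h) (r (i + int j)))"
    by (rule forced_recurrence_forward[OF assms])
  have undo: "Dphi (orbit (i + int k)) (- (real k * h)) (Dphi (orbit (i + int j + 1)) (real (k - 1 - j) * h) x)
      = Dphi (orbit (i + int j + 1)) (- (real (Suc j) * h)) x" if "j < k" for j x
    using Dphi_orbit_add[of "i + int j + 1" "k - 1 - j" "- (real k * h)" x] that
    by (simp add: of_nat_diff algebra_simps)
  have inv: "Dphi (orbit (i + int k)) (- (real k * h)) (Dphi (orbit i) (real k * h) (w i)) = w i"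
    using Dphi_inverse[of "orbit i" "real k * h" "w i"] by (simp add: orbit_shift)
  have sum: "(\<Sum>j<k. Dphi (orbit (i + int k)) (- (real k * h))
                    (Dphi (orbit (i + int j + 1)) (real (k - 1 - j) * h) (r (i + int j))))
      = (\<Sum>j<k. Dphi (orbit (i + int j + 1)) (- (real (Suc j) * h)) (r (i + int j)))"
    by (intro sum.cong refl undo) simp
  have "Dphi (orbit (i + int k)) (- (real k * h)) (w (i + int k))
      = w i + (\<Sum>j<k. Dphi (orbit (i + int j + 1)) (- (real (Suc j) * h)) (r (i + int j)))"
    unfolding F blinfun.add_right blinfun.sum_right inv sum ..
  then show ?thesis by (simp add: algebra_simps)
qed

lemma free_recurrence:
  assumes "\<And>j. i \<le> j \<Longrightarrow> j < i + int k \<Longrightarrow> w (j + 1) = Dphi (orbit j) h (w j)"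
  shows "w (i + int k) = Dphi (orbit i) (real k * h) (w i)"
  using forced_recurrence_forward[of i k w "\<lambda>_. 0"] assms by simp

lemma norm_unstable_forcing_le:
  assumes r_in: "\<And>i. r i \<in> Vp (orbit (i + 1))" and r_le: "\<And>i. norm (r i) \<le> \<rho>"
  shows "norm (\<Sum>j<k. Dphi (orbit (i + int j + 1)) (- (real (Suc j) * h)) (r (i + int j)))
           \<le> Ch * \<rho> / (1 - lam powr h)"
proof -
  define q where "q = lam powr h"
  have q: "0 < q" "q < 1" using lam_powr_bounds[OF h_pos] unfolding q_def by auto
  have "0 \<le> \<rho>" using r_le[of 0] norm_ge_zero[of "r 0"] by linarith
  have "norm (\<Sum>j<k. Dphi (orbit (i + int j + 1)) (- (real (Suc j) * h)) (r (i + int j)))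
      \<le> (\<Sum>j<k. Ch * \<rho> * q ^ j)"
  proof (intro sum_norm_le)
    fix j
    have "norm (Dphi (orbit (i + int j + 1)) (- (real (Suc j) * h)) (r (i + int j)))
        \<le> Ch * lam powr (real (Suc j) * h) * norm (r (i + int j))"
      using norm_Dphi_Vp_le[OF orbit_in r_in, of "- (real (Suc j) * h)"] h_pos by simp
    also have "\<dots> = Ch * q ^ Suc j * norm (r (i + int j))"
      by (simp only: lam_powr_of_nat_mult q_def)
    also have "\<dots> \<le> Ch * q ^ j * \<rho>"
    proof -
      have "q ^ Suc j \<le> q ^ j" using q by (simp add: mult_left_le_one_le)
      then show ?thesis
        using r_le[of "i + int j"] q Ch_ge_1 by (intro mult_mono mult_left_mono) auto
    qed
    finally show "norm (Dphi (orbit (i + int j + 1)) (- (real (Suc j) * h)) (r (i + int j)))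
        \<le> Ch * \<rho> * q ^ j" by (simp add: algebra_simps)
  qed
  also have "\<dots> \<le> Ch * \<rho> * (1 / (1 - q))"
    unfolding sum_distrib_left[symmetric] using sum_power_less_le[of q k] q Ch_ge_1 \<open>0 \<le> \<rho>\<close>
    by (intro mult_left_mono) auto
  finally show ?thesis by (simp add: q_def)
qed

lemma norm_stable_forcing_le:
  assumes r_in: "\<And>i. r i \<in> Vm (orbit (i + 1))" and r_le: "\<And>i. norm (r i) \<le> \<rho>"
  shows "norm (\<Sum>j<k. Dphi (orbit (i + int j + 1)) (real (k - 1 - j) * h) (r (i + int j)))
           \<le> Ch * \<rho> / (1 - lam powr h)"
proof -
  define q where "q = lam powr h"
  have q: "0 < q" "q < 1" using lam_powr_bounds[OF h_pos] unfolding q_def by auto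
  have "0 \<le> \<rho>" using r_le[of 0] norm_ge_zero[of "r 0"] by linarith
  have "norm (\<Sum>j<k. Dphi (orbit (i + int j + 1)) (real (k - 1 - j) * h) (r (i + int j)))
      \<le> (\<Sum>j<k. Ch * \<rho> * q ^ (k - Suc j))"
  proof (intro sum_norm_le)
    fix j
    have "norm (Dphi (orbit (i + int j + 1)) (real (k - 1 - j) * h) (r (i + int j)))
        \<le> Ch * lam powr (real (k - 1 - j) * h) * norm (r (i + int j))"
      using norm_Dphi_Vm_le[OF orbit_in r_in, of "real (k - 1 - j) * h"] h_pos by simp
    also have "\<dots> = Ch * q ^ (k - 1 - j) * norm (r (i + int j))"
      by (simp only: lam_powr_of_nat_mult q_def)
    also have "\<dots> \<le> Ch * q ^ (k - 1 - j) * \<rho>"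
      using r_le[of "i + int j"] q Ch_ge_1 by (intro mult_left_mono) auto
    finally show "norm (Dphi (orbit (i + int j + 1)) (real (k - 1 - j) * h) (r (i + int j)))
        \<le> Ch * \<rho> * q ^ (k - Suc j)" by (simp add: algebra_simps)
  qed
  also have "\<dots> = Ch * \<rho> * (\<Sum>j<k. q ^ j)"
    by (simp only: sum_distrib_left[symmetric] sum.nat_diff_reindex)
  also have "\<dots> \<le> Ch * \<rho> * (1 / (1 - q))"
    using sum_power_less_le[of q k] q Ch_ge_1 \<open>0 \<le> \<rho>\<close> by (intro mult_left_mono) auto
  finally show ?thesis by (simp add: q_def)
qed

text \<open>A bounded solution of the forced recurrence inside the unstable (stable) bundle is
  determined by the forcing, through the backward (forward) formula: as the time horizon
  \<open>k\<close> goes to infinity, the contribution of the solution itself decays like \<open>\<lambda>\<^sup>k\<^sup>h\<close>.\<close>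

lemma bounded_unstable_solution_le:
  assumes w_in: "\<And>i. w i \<in> Vp (orbit i)" and r_in: "\<And>i. r i \<in> Vp (orbit (i + 1))"
    and rec: "\<And>i. w (i + 1) = Dphi (orbit i) h (w i) + r i"
    and r_le: "\<And>i. norm (r i) \<le> \<rho>" and w_le: "\<And>i. norm (w i) \<le> B"
  shows "norm (w i) \<le> Ch * \<rho> / (1 - lam powr h)"
proof (rule le_if_le_plus_power)
  show "0 \<le> lam powr h" "lam powr h < 1" using lam_powr_bounds[OF h_pos] by auto
  fix k
  let ?S = "\<Sum>j<k. Dphi (orbit (i + int j + 1)) (- (real (Suc j) * h)) (r (i + int j))"
  have eq: "w i = Dphi (orbit (i + int k)) (- (real k * h)) (w (i + int k)) - ?S"
    using rec by (intro forced_recurrence_backward)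
  have "norm (w i) \<le> norm (Dphi (orbit (i + int k)) (- (real k * h)) (w (i + int k))) + norm ?S"
    by (subst eq) (rule norm_triangle_ineq4)
  moreover have "norm (Dphi (orbit (i + int k)) (- (real k * h)) (w (i + int k)))
      \<le> Ch * (lam powr h) ^ k * norm (w (i + int k))"
    using norm_Dphi_Vp_le[OF orbit_in w_in, of "- (real k * h)"] h_pos by (simp add: lam_powr_of_nat_mult)
  moreover have "Ch * (lam powr h) ^ k * norm (w (i + int k)) \<le> Ch * (lam powr h) ^ k * B"
    using w_le[of "i + int k"] Ch_ge_1 by (intro mult_left_mono) auto
  ultimately show "norm (w i) \<le> Ch * B * (lam powr h) ^ k + Ch * \<rho> / (1 - lam powr h)"
    using norm_unstable_forcing_le[OF r_in r_le, of i k] by (simp add: mult_ac)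
qed

lemma bounded_stable_solution_le:
  assumes w_in: "\<And>i. w i \<in> Vm (orbit i)" and r_in: "\<And>i. r i \<in> Vm (orbit (i + 1))"
    and rec: "\<And>i. w (i + 1) = Dphi (orbit i) h (w i) + r i"
    and r_le: "\<And>i. norm (r i) \<le> \<rho>" and w_le: "\<And>i. norm (w i) \<le> B"
  shows "norm (w i) \<le> Ch * \<rho> / (1 - lam powr h)"
proof (rule le_if_le_plus_power)
  show "0 \<le> lam powr h" "lam powr h < 1" using lam_powr_bounds[OF h_pos] by auto
  fix k
  define i0 where "i0 = i - int k"
  let ?S = "\<Sum>j<k. Dphi (orbit (i0 + int j + 1)) (real (k - 1 - j) * h) (r (i0 + int j))"
  have eq: "w i = Dphi (orbit i0) (real k * h) (w i0) + ?S"
    using forced_recurrence_forward[of i0 k w r] rec unfolding i0_def by simp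
  have "norm (w i) \<le> norm (Dphi (orbit i0) (real k * h) (w i0)) + norm ?S"
    by (subst eq) (rule norm_triangle_ineq)
  moreover have "norm (Dphi (orbit i0) (real k * h) (w i0)) \<le> Ch * (lam powr h) ^ k * norm (w i0)"
    using norm_Dphi_Vm_le[OF orbit_in w_in, of "real k * h"] h_pos by (simp add: lam_powr_of_nat_mult)
  moreover have "Ch * (lam powr h) ^ k * norm (w i0) \<le> Ch * (lam powr h) ^ k * B"
    using w_le[of i0] Ch_ge_1 by (intro mult_left_mono) auto
  ultimately show "norm (w i) \<le> Ch * B * (lam powr h) ^ k + Ch * \<rho> / (1 - lam powr h)"
    using norm_stable_forcing_le[OF r_in r_le, of i0 k] by (simp add: mult_ac)
qed

end

section \<open>Least squares shadowing\<close>

locale small_step_orbit = sampled_orbit f phi Dphi dsphi Lambda C lam Vp Vm u0 h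
  for f :: "'a::euclidean_space \<Rightarrow> real \<Rightarrow> 'a" and phi Dphi dsphi Lambda C lam Vp Vm u0 h +
  assumes h_le_1: "h \<le> 1" and h_rate: "h * rate \<le> 1"
begin

text \<open>The hyperbolic parts of the shadowing direction are bounded solutions of the recurrences
  forced by the hyperbolic parts of \<open>dsphi (orbit i) h = O(h)\<close>, and \<open>h / (1 - \<lambda>\<^sup>h) = O(1)\<close>.\<close>

lemma shadowing_direction_hyperbolic_le:
  assumes sd: "shadowing_direction phi h orbit vinf etainf"
  shows "norm (Pp (orbit i) (vinf i)) \<le> shadow_bound \<and> norm (Pm (orbit i) (vinf i)) \<le> shadow_bound"
proof -
  obtain B where B: "\<And>i. norm (vinf i) \<le> B" using shadowing_direction_bounded[OF sd] by blast
  define r where "r i = dsphi (orbit i) h" for i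
  have step: "Pp (orbit (i + 1)) (vinf (i + 1)) = Dphi (orbit i) h (Pp (orbit i) (vinf i)) + Pp (orbit (i + 1)) (r i)
      \<and> Pm (orbit (i + 1)) (vinf (i + 1)) = Dphi (orbit i) h (Pm (orbit i) (vinf i)) + Pm (orbit (i + 1)) (r i)" for i
    using components_Dphi_step[OF orbit_in shadowing_direction_variational_eq[OF sd, of i]]
    by (simp add: orbit_step r_def)
  have r_le: "norm (Pp (orbit (i + 1)) (r i)) \<le> P_bound * dsphi_bound * h
      \<and> norm (Pm (orbit (i + 1)) (r i)) \<le> P_bound * dsphi_bound * h" for i
  proof -
    have "P_bound * norm (r i) \<le> P_bound * (dsphi_bound * h)"
      unfolding r_def using norm_dsphi_le[OF orbit_in] h_pos h_le_1 P_bound_pos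
      by (intro mult_left_mono) auto
    then show ?thesis
      using norm_Pp_le[OF orbit_in, of "i + 1" "r i"] norm_Pm_le[OF orbit_in, of "i + 1" "r i"]
      by (simp add: mult.assoc)
  qed
  have w_le: "norm (Pp (orbit i) (vinf i)) \<le> P_bound * B \<and> norm (Pm (orbit i) (vinf i)) \<le> P_bound * B" for i
  proof -
    have "P_bound * norm (vinf i) \<le> P_bound * B" using B P_bound_pos by (intro mult_left_mono) auto
    then show ?thesis
      using norm_Pp_le[OF orbit_in, of i "vinf i"] norm_Pm_le[OF orbit_in, of i "vinf i"] by linarith
  qed
  have "Ch * (P_bound * dsphi_bound * h) / (1 - lam powr h) = Ch * P_bound * dsphi_bound * (h / (1 - lam powr h))"
    by simp
  also have "\<dots> \<le> shadow_bound"
    unfolding shadow_bound_def using step_ratio_le[OF h_pos h_rate] Ch_ge_1 P_bound_pos dsphi_bound_pos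
    by (intro mult_left_mono) auto
  finally have bound: "Ch * (P_bound * dsphi_bound * h) / (1 - lam powr h) \<le> shadow_bound" .
  have "norm (Pp (orbit i) (vinf i)) \<le> Ch * (P_bound * dsphi_bound * h) / (1 - lam powr h)"
    by (rule bounded_unstable_solution_le[where r="\<lambda>i. Pp (orbit (i + 1)) (r i)" and B="P_bound * B"])
       (use splitting_components[OF orbit_in] step r_le w_le in auto)
  moreover have "norm (Pm (orbit i) (vinf i)) \<le> Ch * (P_bound * dsphi_bound * h) / (1 - lam powr h)"
    by (rule bounded_stable_solution_le[where r="\<lambda>i. Pm (orbit (i + 1)) (r i)" and B="P_bound * B"])
       (use splitting_components[OF orbit_in] step r_le w_le in auto)
  ultimately show ?thesis using bound by linarith
qed

text \<open>The hyperbolic parts of the shadowing direction, with the neutral part of the forcing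
  absorbed into the time dilation, form a feasible point whose cost per step is bounded
  independently of \<open>h\<close>.\<close>

lemma shadowing_competitor_feasible:
  assumes sd: "shadowing_direction phi h orbit vinf etainf"
  obtains c where "\<And>i. \<bar>c i\<bar> \<le> coef_bound * dsphi_bound * h"
    and "lss_feasible phi f Dphi dsphi h orbit N (\<lambda>i. Pp (orbit i) (vinf i) + Pm (orbit i) (vinf i))
           (\<lambda>i. - c i / h)"
proof -
  have "\<forall>i. \<exists>c. P0 (orbit (i + 1)) (dsphi (orbit i) h) = c *\<^sub>R f (orbit (i + 1)) 0
      \<and> \<bar>c\<bar> \<le> coef_bound * norm (dsphi (orbit i) h)"
    using P0_eq_scaleR_field[OF orbit_in] by blast
  then obtain c where c: "\<And>i. P0 (orbit (i + 1)) (dsphi (orbit i) h) = c i *\<^sub>R f (orbit (i + 1)) 0"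
    and c_le: "\<And>i. \<bar>c i\<bar> \<le> coef_bound * norm (dsphi (orbit i) h)"
    by metis
  show thesis
  proof (rule that)
    fix i
    have "coef_bound * norm (dsphi (orbit i) h) \<le> coef_bound * (dsphi_bound * h)"
      using norm_dsphi_le[OF orbit_in] h_pos h_le_1 coef_bound_pos by (intro mult_left_mono) auto
    then show "\<bar>c i\<bar> \<le> coef_bound * dsphi_bound * h"
      using c_le[of i] by (simp add: mult.assoc)
  next
    show "lss_feasible phi f Dphi dsphi h orbit N (\<lambda>i. Pp (orbit i) (vinf i) + Pm (orbit i) (vinf i))
           (\<lambda>i. - c i / h)"
      unfolding lss_feasible_def
    proof (intro allI impI)
      fix i
      let ?ds = "dsphi (orbit i) h"
      have "?ds = Pp (orbit (i + 1)) ?ds + Pm (orbit (i + 1)) ?ds + c i *\<^sub>R f (orbit (i + 1)) 0"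
        using splitting_components[OF orbit_in, of "i + 1" ?ds] c[of i] by simp
      moreover have "(h * (- c i / h)) *\<^sub>R f (orbit (i + 1)) 0 = - (c i *\<^sub>R f (orbit (i + 1)) 0)"
        using h_pos by simp
      moreover note components_Dphi_step[OF orbit_in shadowing_direction_variational_eq[OF sd, of i]]
      ultimately show "Pp (orbit (i + 1)) (vinf (i + 1)) + Pm (orbit (i + 1)) (vinf (i + 1))
          = Dphi (orbit i) h (Pp (orbit i) (vinf i) + Pm (orbit i) (vinf i)) + ?ds
            + (h * (- c i / h)) *\<^sub>R f (phi 0 (orbit i) h) 0"
        unfolding orbit_step blinfun.add_right using h_pos by (simp add: algebra_simps)
    qed
  qed
qed

lemma lss_objective_le_competitor:
  assumes sol: "lss_solution phi f Dphi dsphi alpha h orbit N v eta" and alpha: "0 < alpha"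
    and sd: "shadowing_direction phi h orbit vinf etainf" and N: "0 \<le> N"
  shows "(\<Sum>i\<in>{1..N}. (norm (v i))\<^sup>2) \<le> real_of_int N * competitor_cost alpha"
proof -
  obtain c where c: "\<And>i. \<bar>c i\<bar> \<le> coef_bound * dsphi_bound * h"
    and feasible: "lss_feasible phi f Dphi dsphi h orbit N (\<lambda>i. Pp (orbit i) (vinf i) + Pm (orbit i) (vinf i))
           (\<lambda>i. - c i / h)"
    using shadowing_competitor_feasible[OF sd] by blast
  have cost: "(norm (Pp (orbit i) (vinf i) + Pm (orbit i) (vinf i)))\<^sup>2 + alpha * (- c i / h)\<^sup>2
      \<le> competitor_cost alpha" for i
  proof -
    have "norm (Pp (orbit i) (vinf i) + Pm (orbit i) (vinf i)) \<le> 2 * shadow_bound"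
      using shadowing_direction_hyperbolic_le[OF sd, of i]
        norm_triangle_ineq[of "Pp (orbit i) (vinf i)" "Pm (orbit i) (vinf i)"] by linarith
    then have "(norm (Pp (orbit i) (vinf i) + Pm (orbit i) (vinf i)))\<^sup>2 \<le> (2 * shadow_bound)\<^sup>2"
      by (intro power_mono) auto
    moreover have eta: "\<bar>- c i / h\<bar> \<le> coef_bound * dsphi_bound"
      using c[of i] h_pos by (simp add: divide_le_eq)
    have "(- c i / h)\<^sup>2 \<le> (coef_bound * dsphi_bound)\<^sup>2"
      using power_mono[OF eta abs_ge_zero, of 2] by (simp only: power2_abs)
    then have "alpha * (- c i / h)\<^sup>2 \<le> alpha * (coef_bound * dsphi_bound)\<^sup>2"
      using alpha by (intro mult_left_mono) auto
    ultimately show ?thesis unfolding competitor_cost_def by linarith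
  qed
  have "(\<Sum>i\<in>{1..N}. (norm (v i))\<^sup>2) \<le> lss_objective alpha N v eta"
    unfolding lss_objective_def using alpha by (intro sum_mono) simp
  also have "\<dots> \<le> lss_objective alpha N (\<lambda>i. Pp (orbit i) (vinf i) + Pm (orbit i) (vinf i)) (\<lambda>i. - c i / h)"
    using sol feasible unfolding lss_solution_def by blast
  also have "\<dots> \<le> (\<Sum>i\<in>{1..N}. competitor_cost alpha)"
    unfolding lss_objective_def using cost by (intro sum_mono)
  also have "\<dots> = real_of_int N * competitor_cost alpha"
    using N by simp
  finally show ?thesis .
qed

lemma lss_error_step:
  assumes sol: "lss_solution phi f Dphi dsphi alpha h orbit N v eta"
    and sd: "shadowing_direction phi h orbit vinf etainf" and i: "1 \<le> i" "i < N"
  shows "Pp (orbit (i + 1)) (v (i + 1) - vinf (i + 1)) = Dphi (orbit i) h (Pp (orbit i) (v i - vinf i))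
       \<and> Pm (orbit (i + 1)) (v (i + 1) - vinf (i + 1)) = Dphi (orbit i) h (Pm (orbit i) (v i - vinf i))"
proof -
  have "v (i + 1) = Dphi (orbit i) h (v i) + dsphi (orbit i) h + (h * eta i) *\<^sub>R f (phi 0 (orbit i) h) 0"
    using sol i unfolding lss_solution_def lss_feasible_def by blast
  then have e: "v (i + 1) - vinf (i + 1)
      = Dphi (orbit i) h (v i - vinf i) + 0 + (h * (eta i - etainf i)) *\<^sub>R f (phi 0 (orbit i) h) 0"
    unfolding shadowing_direction_variational_eq[OF sd, of i]
    by (simp add: blinfun.diff_right algebra_simps)
  moreover have "Pp (orbit (i + 1)) 0 = 0" "Pm (orbit (i + 1)) 0 = 0"
    using linear_0[OF linear_components(1)[OF orbit_in]] linear_0[OF linear_components(2)[OF orbit_in]]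
    by blast+
  ultimately show ?thesis
    using components_Dphi_step[OF orbit_in e] by (simp add: orbit_step)
qed

lemma lss_error_decay:
  assumes sol: "lss_solution phi f Dphi dsphi alpha h orbit N v eta"
    and sd: "shadowing_direction phi h orbit vinf etainf" and i: "1 \<le> i" "i \<le> N"
  shows "norm (Pp (orbit i) (v i - vinf i)) \<le> Ch * (lam powr h) ^ nat (N - i) * norm (Pp (orbit N) (v N - vinf N))"
    and "norm (Pm (orbit i) (v i - vinf i)) \<le> Ch * (lam powr h) ^ nat (i - 1) * norm (Pm (orbit 1) (v 1 - vinf 1))"
proof -
  let ?ep = "\<lambda>i. Pp (orbit i) (v i - vinf i)" and ?em = "\<lambda>i. Pm (orbit i) (v i - vinf i)"
  note step = lss_error_step[OF sol sd]
  have "?ep (i + int (nat (N - i))) = Dphi (orbit i) (real (nat (N - i)) * h) (?ep i)"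
    using step i by (intro free_recurrence) auto
  then have "?ep i = Dphi (orbit N) (- (real (nat (N - i)) * h)) (?ep N)"
    using Dphi_inverse[of "orbit i" "real (nat (N - i)) * h" "?ep i"] orbit_shift[of i "nat (N - i)"] i
    by simp
  moreover have "?ep N \<in> Vp (orbit N)" using splitting_components[OF orbit_in] by blast
  ultimately show "norm (?ep i) \<le> Ch * (lam powr h) ^ nat (N - i) * norm (?ep N)"
    using norm_Dphi_Vp_le[OF orbit_in, of "?ep N" N "- (real (nat (N - i)) * h)"] h_pos
    by (simp add: lam_powr_of_nat_mult)
  have "?em (1 + int (nat (i - 1))) = Dphi (orbit 1) (real (nat (i - 1)) * h) (?em 1)"
    using step i by (intro free_recurrence) auto
  then have "?em i = Dphi (orbit 1) (real (nat (i - 1)) * h) (?em 1)"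
    using i by simp
  moreover have "?em 1 \<in> Vm (orbit 1)" using splitting_components[OF orbit_in] by blast
  ultimately show "norm (?em i) \<le> Ch * (lam powr h) ^ nat (i - 1) * norm (?em 1)"
    using norm_Dphi_Vm_le[OF orbit_in, of "?em 1" 1 "real (nat (i - 1)) * h"] h_pos
    by (simp add: lam_powr_of_nat_mult)
qed

lemma lss_error_hyperbolic_le:
  assumes sd: "shadowing_direction phi h orbit vinf etainf"
  shows "norm (Pp (orbit i) (v i - vinf i)) \<le> P_bound * norm (v i) + shadow_bound"
    and "norm (Pm (orbit i) (v i - vinf i)) \<le> P_bound * norm (v i) + shadow_bound"
proof -
  have eq: "Pp (orbit i) (v i - vinf i) = Pp (orbit i) (v i) - Pp (orbit i) (vinf i)"
    "Pm (orbit i) (v i - vinf i) = Pm (orbit i) (v i) - Pm (orbit i) (vinf i)"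
    using linear_diff[OF linear_components(1)[OF orbit_in]] linear_diff[OF linear_components(2)[OF orbit_in]]
    by blast+
  show "norm (Pp (orbit i) (v i - vinf i)) \<le> P_bound * norm (v i) + shadow_bound"
    unfolding eq(1)
    using norm_Pp_le[OF orbit_in, of i "v i"] shadowing_direction_hyperbolic_le[OF sd, of i]
      norm_triangle_ineq4[of "Pp (orbit i) (v i)" "Pp (orbit i) (vinf i)"]
    by linarith
  show "norm (Pm (orbit i) (v i - vinf i)) \<le> P_bound * norm (v i) + shadow_bound"
    unfolding eq(2)
    using norm_Pm_le[OF orbit_in, of i "v i"] shadowing_direction_hyperbolic_le[OF sd, of i]
      norm_triangle_ineq4[of "Pm (orbit i) (v i)" "Pm (orbit i) (vinf i)"]
    by linarith
qed

text \<open>Pigeonhole, using the bound on the objective given by the competitor.\<close>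

lemma lss_solution_small_in_window:
  assumes sol: "lss_solution phi f Dphi dsphi alpha h orbit N v eta" and alpha: "0 < alpha"
    and sd: "shadowing_direction phi h orbit vinf etainf"
    and N: "0 \<le> N" "real_of_int N \<le> T / h"
    and I: "I \<subseteq> {1..N}" "card I = nat \<lfloor>1 / h\<rfloor> + 1"
  shows "\<exists>i\<in>I. norm (v i) \<le> sqrt (T * competitor_cost alpha)"
proof -
  have "finite I" "I \<noteq> {}" using I finite_subset by fastforce+
  moreover have "(\<Sum>i\<in>I. (norm (v i))\<^sup>2) \<le> real_of_int N * competitor_cost alpha"
    using sum_mono2[of "{1..N}" I "\<lambda>i. (norm (v i))\<^sup>2"] I lss_objective_le_competitor[OF sol alpha sd N(1)]
    by fastforce
  ultimately obtain i where i: "i \<in> I" "(norm (v i))\<^sup>2 * real (card I) \<le> real_of_int N * competitor_cost alpha"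
    using exists_le_average by blast
  have "1 / h \<le> real (card I)" using I(2) h_pos by linarith
  then have "(norm (v i))\<^sup>2 * (1 / h) \<le> (norm (v i))\<^sup>2 * real (card I)"
    by (intro mult_left_mono) auto
  also have "\<dots> \<le> real_of_int N * competitor_cost alpha" by (rule i(2))
  also have "\<dots> \<le> (T / h) * competitor_cost alpha"
    using N(2) competitor_cost_nonneg[of alpha] alpha by (intro mult_right_mono) auto
  finally have "(norm (v i))\<^sup>2 \<le> T * competitor_cost alpha"
    using h_pos by (simp add: field_simps)
  with i(1) show ?thesis by (auto intro: real_le_rsqrt)
qed

lemma lss_solution_small_near_endpoints:
  assumes sol: "lss_solution phi f Dphi dsphi alpha h orbit N v eta" and alpha: "0 < alpha"
    and sd: "shadowing_direction phi h orbit vinf etainf"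
    and T: "3 \<le> T" and N: "N = \<lfloor>T / h\<rfloor>"
  obtains i j where "i \<in> {1..N}" "real (nat (N - i)) * h \<le> 1" "norm (v i) \<le> sqrt (T * competitor_cost alpha)"
    and "j \<in> {1..N}" "real (nat (j - 1)) * h \<le> 1" "norm (v j) \<le> sqrt (T * competitor_cost alpha)"
proof -
  define M where "M = nat \<lfloor>1 / h\<rfloor>"
  have M: "real M \<le> 1 / h" "1 / h < real M + 1"
    unfolding M_def using h_pos h_le_1 by (simp_all add: of_nat_nat)
  have Mh: "real k * h \<le> 1" if "k \<le> M" for k
  proof -
    have "real k * h \<le> real M * h" using that h_pos by (intro mult_right_mono) auto
    also have "\<dots> \<le> 1" using M(1) h_pos by (simp add: field_simps)
    finally show ?thesis .
  qed
  have "T / h \<ge> 3 / h" "1 \<le> 1 / h" using T h_pos h_le_1 by (simp_all add: divide_right_mono)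
  then have NM: "int M + 2 \<le> N" using M unfolding N by linarith
  have NT: "0 \<le> N" "real_of_int N \<le> T / h" using NM unfolding N by linarith+
  have card: "card {N - int M..N} = nat \<lfloor>1 / h\<rfloor> + 1" "card {1..1 + int M} = nat \<lfloor>1 / h\<rfloor> + 1"
    unfolding M_def using h_pos by (simp_all add: nat_add_distrib)
  obtain i where "i \<in> {N - int M..N}" "norm (v i) \<le> sqrt (T * competitor_cost alpha)"
    using lss_solution_small_in_window[OF sol alpha sd NT _ card(1)] NM by auto
  moreover obtain j where "j \<in> {1..1 + int M}" "norm (v j) \<le> sqrt (T * competitor_cost alpha)"
    using lss_solution_small_in_window[OF sol alpha sd NT _ card(2)] NM by auto
  ultimately show thesis
    using that[of i j] Mh[of "nat (N - i)"] Mh[of "nat (j - 1)"] NM by auto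
qed

lemma lss_error_transport_le:
  assumes sd: "shadowing_direction phi h orbit vinf etainf"
    and v: "norm (v i) \<le> sqrt (T * competitor_cost alpha)" and t: "\<bar>t\<bar> \<le> 1"
  shows "norm (Dphi (orbit i) t (Pp (orbit i) (v i - vinf i))) \<le> endpoint_bound alpha T"
    and "norm (Dphi (orbit i) t (Pm (orbit i) (v i - vinf i))) \<le> endpoint_bound alpha T"
proof -
  have t': "t \<in> {-1..1}" using t by auto
  have "P_bound * norm (v i) \<le> P_bound * sqrt (T * competitor_cost alpha)"
    using v P_bound_pos by (intro mult_left_mono) auto
  then have "norm x \<le> P_bound * sqrt (T * competitor_cost alpha) + shadow_bound"
    if "x \<in> {Pp (orbit i) (v i - vinf i), Pm (orbit i) (v i - vinf i)}" for x
    using that lss_error_hyperbolic_le[OF sd, where v=v and i=i] by auto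
  then have "Dphi_bound * norm x \<le> endpoint_bound alpha T"
    if "x \<in> {Pp (orbit i) (v i - vinf i), Pm (orbit i) (v i - vinf i)}" for x
    unfolding endpoint_bound_def using that Dphi_bound_pos by (intro mult_left_mono) auto
  moreover have "norm (Dphi (orbit i) t x) \<le> Dphi_bound * norm x" for x
    by (rule norm_Dphi_le[OF orbit_in t'])
  ultimately show "norm (Dphi (orbit i) t (Pp (orbit i) (v i - vinf i))) \<le> endpoint_bound alpha T"
    and "norm (Dphi (orbit i) t (Pm (orbit i) (v i - vinf i))) \<le> endpoint_bound alpha T"
    by (meson insertI1 insertI2 order_trans)+
qed

text \<open>Near each endpoint, at most one time unit away, there is a step where \<open>v\<close> is small;
  there the hyperbolic parts of the error are small, and they are transported to the endpoint
  by the linearized flow over a time at most \<open>1\<close>.\<close>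

lemma lss_error_endpoints_le:
  assumes sol: "lss_solution phi f Dphi dsphi alpha h orbit N v eta" and alpha: "0 < alpha"
    and sd: "shadowing_direction phi h orbit vinf etainf"
    and T: "3 \<le> T" and N: "N = \<lfloor>T / h\<rfloor>"
  shows "norm (Pp (orbit N) (v N - vinf N)) \<le> endpoint_bound alpha T"
    and "norm (Pm (orbit 1) (v 1 - vinf 1)) \<le> endpoint_bound alpha T"
proof -
  obtain i j where i: "i \<in> {1..N}" "real (nat (N - i)) * h \<le> 1" "norm (v i) \<le> sqrt (T * competitor_cost alpha)"
    and j: "j \<in> {1..N}" "real (nat (j - 1)) * h \<le> 1" "norm (v j) \<le> sqrt (T * competitor_cost alpha)"
    using lss_solution_small_near_endpoints[OF sol alpha sd T N] by blast
  have "Pp (orbit (i + int (nat (N - i)))) (v (i + int (nat (N - i))) - vinf (i + int (nat (N - i))))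
      = Dphi (orbit i) (real (nat (N - i)) * h) (Pp (orbit i) (v i - vinf i))"
    using lss_error_step[OF sol sd] i by (intro free_recurrence) auto
  then show "norm (Pp (orbit N) (v N - vinf N)) \<le> endpoint_bound alpha T"
    using lss_error_transport_le(1)[where v=v, OF sd i(3)] i h_pos by simp
  have "Pm (orbit (1 + int (nat (j - 1)))) (v (1 + int (nat (j - 1))) - vinf (1 + int (nat (j - 1))))
      = Dphi (orbit 1) (real (nat (j - 1)) * h) (Pm (orbit 1) (v 1 - vinf 1))"
    using lss_error_step[OF sol sd] j by (intro free_recurrence) auto
  then have "Pm (orbit 1) (v 1 - vinf 1) = Dphi (orbit j) (- (real (nat (j - 1)) * h)) (Pm (orbit j) (v j - vinf j))"
    using Dphi_inverse[of "orbit 1" "real (nat (j - 1)) * h"] orbit_shift[of 1 "nat (j - 1)"] j by simp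
  then show "norm (Pm (orbit 1) (v 1 - vinf 1)) \<le> endpoint_bound alpha T"
    using lss_error_transport_le(2)[where v=v, OF sd j(3)] j h_pos by simp
qed

lemma lss_error_le:
  assumes sol: "lss_solution phi f Dphi dsphi alpha h orbit N v eta" and alpha: "0 < alpha"
    and sd: "shadowing_direction phi h orbit vinf etainf"
    and T: "3 \<le> T" and N: "N = \<lfloor>T / h\<rfloor>" and i: "i \<in> {1..N}"
  shows "norm (Pp (orbit i) (v i - vinf i)) \<le> Ch * (lam powr h) ^ nat (N - i) * endpoint_bound alpha T"
    and "norm (Pm (orbit i) (v i - vinf i)) \<le> Ch * (lam powr h) ^ nat (i - 1) * endpoint_bound alpha T"
proof -
  have i': "1 \<le> i" "i \<le> N" using i by auto
  have "Ch * (lam powr h) ^ nat (N - i) * norm (Pp (orbit N) (v N - vinf N))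
      \<le> Ch * (lam powr h) ^ nat (N - i) * endpoint_bound alpha T"
    using lss_error_endpoints_le(1)[OF sol alpha sd T N] Ch_ge_1 by (intro mult_left_mono) auto
  then show "norm (Pp (orbit i) (v i - vinf i)) \<le> Ch * (lam powr h) ^ nat (N - i) * endpoint_bound alpha T"
    using lss_error_decay(1)[OF sol sd i'] by linarith
  have "Ch * (lam powr h) ^ nat (i - 1) * norm (Pm (orbit 1) (v 1 - vinf 1))
      \<le> Ch * (lam powr h) ^ nat (i - 1) * endpoint_bound alpha T"
    using lss_error_endpoints_le(2)[OF sol alpha sd T N] Ch_ge_1 by (intro mult_left_mono) auto
  then show "norm (Pm (orbit i) (v i - vinf i)) \<le> Ch * (lam powr h) ^ nat (i - 1) * endpoint_bound alpha T"
    using lss_error_decay(2)[OF sol sd i'] by linarith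
qed

lemma lss_functional_error_le:
  assumes sol: "lss_solution phi f Dphi dsphi alpha h orbit N v eta" and alpha: "0 < alpha"
    and sd: "shadowing_direction phi h orbit vinf etainf"
    and T: "3 \<le> T" and N: "N = \<lfloor>T / h\<rfloor>"
    and Jb: "0 \<le> Jb" and J: "\<And>u v. u \<in> Lambda \<Longrightarrow> \<bar>DJ u 0 v\<bar> \<le> Jb * norm v"
  shows "\<bar>h / T * (\<Sum>i\<in>{1..N}. DJ (orbit i) 0 (Pp (orbit i) (v i - vinf i) + Pm (orbit i) (v i - vinf i)))\<bar>
           \<le> (4 * Jb * Ch / rate) * endpoint_bound alpha T / T"
proof -
  define q where "q = lam powr h"
  have q: "0 \<le> q" "q < 1" using lam_powr_bounds[OF h_pos] unfolding q_def by auto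
  let ?K = "Jb * Ch * endpoint_bound alpha T"
  have K: "0 \<le> ?K" using Jb Ch_ge_1 endpoint_bound_pos[of alpha T] alpha T by simp
  have "\<bar>\<Sum>i\<in>{1..N}. DJ (orbit i) 0 (Pp (orbit i) (v i - vinf i) + Pm (orbit i) (v i - vinf i))\<bar>
      \<le> (\<Sum>i\<in>{1..N}. ?K * q ^ nat (N - i) + ?K * q ^ nat (i - 1))"
  proof (rule order_trans[OF sum_abs sum_mono])
    fix i assume i: "i \<in> {1..N}"
    have "\<bar>DJ (orbit i) 0 (Pp (orbit i) (v i - vinf i) + Pm (orbit i) (v i - vinf i))\<bar>
        \<le> Jb * (norm (Pp (orbit i) (v i - vinf i)) + norm (Pm (orbit i) (v i - vinf i)))"
      using J[OF orbit_in, of i "Pp (orbit i) (v i - vinf i) + Pm (orbit i) (v i - vinf i)"]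
        mult_left_mono[OF norm_triangle_ineq[of "Pp (orbit i) (v i - vinf i)" "Pm (orbit i) (v i - vinf i)"] Jb]
      by linarith
    also have "\<dots> \<le> Jb * (Ch * q ^ nat (N - i) * endpoint_bound alpha T + Ch * q ^ nat (i - 1) * endpoint_bound alpha T)"
      using lss_error_le[OF sol alpha sd T N i] Jb unfolding q_def
      by (intro mult_left_mono add_mono) auto
    finally show "\<bar>DJ (orbit i) 0 (Pp (orbit i) (v i - vinf i) + Pm (orbit i) (v i - vinf i))\<bar>
        \<le> ?K * q ^ nat (N - i) + ?K * q ^ nat (i - 1)" by (simp add: algebra_simps)
  qed
  also have "\<dots> \<le> ?K * (1 / (1 - q)) + ?K * (1 / (1 - q))"
    unfolding sum.distrib sum_distrib_left[symmetric]
    using sum_power_icc_int_le[OF q] K by (intro add_mono mult_left_mono) auto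
  finally have S: "\<bar>\<Sum>i\<in>{1..N}. DJ (orbit i) 0 (Pp (orbit i) (v i - vinf i) + Pm (orbit i) (v i - vinf i))\<bar>
      \<le> 2 * ?K / (1 - q)" by simp
  have "\<bar>h / T * (\<Sum>i\<in>{1..N}. DJ (orbit i) 0 (Pp (orbit i) (v i - vinf i) + Pm (orbit i) (v i - vinf i)))\<bar>
      = h / T * \<bar>\<Sum>i\<in>{1..N}. DJ (orbit i) 0 (Pp (orbit i) (v i - vinf i) + Pm (orbit i) (v i - vinf i))\<bar>"
    using h_pos T by (simp add: abs_mult)
  also have "\<dots> \<le> h / T * (2 * ?K / (1 - q))"
    using S h_pos T by (intro mult_left_mono) auto
  also have "\<dots> = 2 * ?K / T * (h / (1 - q))" by (simp add: field_simps)
  also have "\<dots> \<le> 2 * ?K / T * (2 / rate)"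
    using step_ratio_le[OF h_pos h_rate] K T unfolding q_def by (intro mult_left_mono) auto
  finally show ?thesis by (simp add: field_simps)
qed

lemma lss_error_estimates:
  assumes alpha: "0 < alpha" and T: "3 < T"
    and Jb: "0 \<le> Jb" and J: "\<And>u v. u \<in> Lambda \<Longrightarrow> \<bar>DJ u 0 v\<bar> \<le> Jb * norm v"
  shows "let N = \<lfloor>T / h\<rfloor>; u = (\<lambda>i::int. phi 0 u0 (real_of_int i * h)) in
     \<forall>v eta vinf etainf ep em ez.
       lss_solution phi f Dphi dsphi alpha h u N v eta \<longrightarrow>
       shadowing_direction phi h u vinf etainf \<longrightarrow>
       (\<forall>i\<in>{1..N}. v i - vinf i = ep i + em i + ez i \<and>
                    ep i \<in> Vp (u i) \<and> em i \<in> Vm (u i) \<and> ez i \<in> V0 f (u i)) \<longrightarrow>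
       (\<forall>i\<in>{1..N}. norm (ep i) \<le> Ch * endpoint_bound alpha 1 * sqrt T
                  \<and> norm (em i) \<le> Ch * endpoint_bound alpha 1 * sqrt T) \<and>
       \<bar>h / T * (\<Sum>i\<in>{1..N}. DJ (u i) 0 (ep i + em i))\<bar> \<le> (4 * Jb * Ch / rate) * endpoint_bound alpha 1 / sqrt T"
  unfolding Let_def orbit_def[symmetric]
proof (intro allI impI)
  fix v eta vinf etainf ep em ez
  assume sol: "lss_solution phi f Dphi dsphi alpha h orbit \<lfloor>T / h\<rfloor> v eta"
    and sd: "shadowing_direction phi h orbit vinf etainf"
    and dec: "\<forall>i\<in>{1..\<lfloor>T / h\<rfloor>}. v i - vinf i = ep i + em i + ez i \<and>
                    ep i \<in> Vp (orbit i) \<and> em i \<in> Vm (orbit i) \<and> ez i \<in> V0 f (orbit i)"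
  have T3: "3 \<le> T" using T by simp
  have parts: "ep i = Pp (orbit i) (v i - vinf i)" "em i = Pm (orbit i) (v i - vinf i)"
    if "i \<in> {1..\<lfloor>T / h\<rfloor>}" for i
    using splitting_components_eq[OF orbit_in[of i], of "ep i" "em i" "ez i" "v i - vinf i"] dec that by auto
  have decay: "Ch * (lam powr h) ^ k * endpoint_bound alpha T \<le> Ch * endpoint_bound alpha 1 * sqrt T" for k
  proof -
    have "(lam powr h) ^ k \<le> 1" using lam_powr_bounds[OF h_pos] by (simp add: power_le_one)
    then have "Ch * (lam powr h) ^ k * endpoint_bound alpha T \<le> Ch * endpoint_bound alpha T"
      using Ch_ge_1 endpoint_bound_pos[of alpha T] alpha T by (simp add: mult_le_cancel_left1)
    also have "\<dots> \<le> Ch * endpoint_bound alpha 1 * sqrt T"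
      using endpoint_bound_le_sqrt[of alpha T] alpha T Ch_ge_1 by (simp add: mult.assoc)
    finally show ?thesis .
  qed
  have "(\<Sum>i\<in>{1..\<lfloor>T / h\<rfloor>}. DJ (orbit i) 0 (ep i + em i))
      = (\<Sum>i\<in>{1..\<lfloor>T / h\<rfloor>}. DJ (orbit i) 0 (Pp (orbit i) (v i - vinf i) + Pm (orbit i) (v i - vinf i)))"
    by (rule sum.cong) (simp_all add: parts)
  then have "\<bar>h / T * (\<Sum>i\<in>{1..\<lfloor>T / h\<rfloor>}. DJ (orbit i) 0 (ep i + em i))\<bar>
      \<le> (4 * Jb * Ch / rate) * endpoint_bound alpha T / T"
    using lss_functional_error_le[where DJ=DJ, OF sol alpha sd T3 refl Jb J] by simp
  also have "\<dots> \<le> (4 * Jb * Ch / rate) * endpoint_bound alpha 1 / sqrt T"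
    using alpha T Jb Ch_ge_1 rate_pos by (intro endpoint_bound_div_le) auto
  finally have "\<bar>h / T * (\<Sum>i\<in>{1..\<lfloor>T / h\<rfloor>}. DJ (orbit i) 0 (ep i + em i))\<bar>
      \<le> (4 * Jb * Ch / rate) * endpoint_bound alpha 1 / sqrt T" .
  moreover have "norm (ep i) \<le> Ch * endpoint_bound alpha 1 * sqrt T \<and> norm (em i) \<le> Ch * endpoint_bound alpha 1 * sqrt T"
    if "i \<in> {1..\<lfloor>T / h\<rfloor>}" for i
    using lss_error_le[OF sol alpha sd T3 refl that] parts[OF that]
      decay[of "nat (\<lfloor>T / h\<rfloor> - i)"] decay[of "nat (i - 1)"] by auto
  ultimately show "(\<forall>i\<in>{1..\<lfloor>T / h\<rfloor>}. norm (ep i) \<le> Ch * endpoint_bound alpha 1 * sqrt T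
                  \<and> norm (em i) \<le> Ch * endpoint_bound alpha 1 * sqrt T) \<and>
      \<bar>h / T * (\<Sum>i\<in>{1..\<lfloor>T / h\<rfloor>}. DJ (orbit i) 0 (ep i + em i))\<bar>
        \<le> (4 * Jb * Ch / rate) * endpoint_bound alpha 1 / sqrt T"
    by blast
qed

end

theorem mainTheorem7:
  fixes f :: "'a::euclidean_space \<Rightarrow> real \<Rightarrow> 'a"
    and phi :: "real \<Rightarrow> 'a \<Rightarrow> real \<Rightarrow> 'a"
    and Dphi :: "'a \<Rightarrow> real \<Rightarrow> 'a \<Rightarrow>\<^sub>L 'a"
    and dsphi :: "'a \<Rightarrow> real \<Rightarrow> 'a"
    and Lambda :: "'a set" and C lam :: real
    and Vp Vm :: "'a \<Rightarrow> 'a set"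
    and J :: "'a \<Rightarrow> real \<Rightarrow> real" and DJ :: "'a \<Rightarrow> real \<Rightarrow> 'a \<Rightarrow>\<^sub>L real"
    and alpha :: real and u0 :: 'a
  assumes phi_C2: "C2_map (\<lambda>(s, u, t). phi s u t)"
    and phi_init: "\<forall>s u. phi s u 0 = u"
    and phi_ode: "\<forall>s u t. ((\<lambda>t. phi s u t) has_vector_derivative f (phi s u t) s) (at t)"
    and Dphi_def: "\<forall>u t. ((\<lambda>x. phi 0 x t) has_derivative blinfun_apply (Dphi u t)) (at u)"
    and dsphi_def: "\<forall>u t. ((\<lambda>s. phi s u t) has_vector_derivative dsphi u t) (at 0)"
    and Lambda_compact: "compact Lambda"
    and Lambda_inv: "\<forall>u\<in>Lambda. \<forall>t. phi 0 u t \<in> Lambda"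
    and C_pos: "C > 0" and lam: "0 < lam" "lam < 1"
    and hyp: "hyperbolic_splitting f phi Dphi Lambda C lam Vp Vm"
    and J_C1: "C1_map (\<lambda>(u, s). J u s)"
    and DJ_def: "\<forall>u s. ((\<lambda>x. J x s) has_derivative blinfun_apply (DJ u s)) (at u)"
    and alpha_pos: "alpha > 0"
    and u0_in: "u0 \<in> Lambda"
  shows "\<exists>E A' h0 T0. E > 0 \<and> A' > 0 \<and> h0 > 0 \<and> T0 > 0 \<and>
    (\<forall>h T. 0 < h \<longrightarrow> h < h0 \<longrightarrow> T > T0 \<longrightarrow>
      (let N = \<lfloor>T / h\<rfloor>; u = (\<lambda>i::int. phi 0 u0 (real_of_int i * h)) in
       \<forall>v eta vinf etainf ep em ez.
         lss_solution phi f Dphi dsphi alpha h u N v eta \<longrightarrow>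
         shadowing_direction phi h u vinf etainf \<longrightarrow>
         (\<forall>i\<in>{1..N}. v i - vinf i = ep i + em i + ez i \<and>
                      ep i \<in> Vp (u i) \<and> em i \<in> Vm (u i) \<and> ez i \<in> V0 f (u i)) \<longrightarrow>
         (\<forall>i\<in>{1..N}. norm (ep i) \<le> E * sqrt T \<and> norm (em i) \<le> E * sqrt T) \<and>
         \<bar>h / T * (\<Sum>i\<in>{1..N}. DJ (u i) 0 (ep i + em i))\<bar> \<le> A' / sqrt T))"
proof -
  interpret hyperbolic_flow f phi Dphi dsphi Lambda C lam Vp Vm
    using phi_C2 phi_init phi_ode Dphi_def dsphi_def Lambda_compact Lambda_inv lam hyp
    by unfold_locales auto
  obtain Jb where Jb: "0 < Jb" "\<And>u v. u \<in> Lambda \<Longrightarrow> \<bar>DJ u 0 v\<bar> \<le> Jb * norm v"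
    using partial_derivative_bounded_on[OF J_C1 DJ_def Lambda_compact] by blast
  have orbits: "small_step_orbit f phi Dphi dsphi Lambda C lam Vp Vm u0 h" if "0 < h" "h < min 1 (1 / rate)" for h
    using that u0_in rate_pos by unfold_locales (auto simp: field_simps)
  note estimates = small_step_orbit.lss_error_estimates[where DJ=DJ,
      OF orbits alpha_pos _ less_imp_le[OF Jb(1)] Jb(2)]
  have "0 < endpoint_bound alpha 1" using alpha_pos by (intro endpoint_bound_pos) auto
  then have pos: "0 < Ch * endpoint_bound alpha 1" "0 < (4 * Jb * Ch / rate) * endpoint_bound alpha 1"
    "0 < min 1 (1 / rate)"
    using Ch_ge_1 Jb(1) rate_pos by simp_all
  show ?thesis
    by (rule exI[of _ "Ch * endpoint_bound alpha 1"], rule exI[of _ "(4 * Jb * Ch / rate) * endpoint_bound alpha 1"],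
        rule exI[of _ "min 1 (1 / rate)"], rule exI[of _ 3], intro conjI allI impI)
       (fact pos, fact pos, fact pos, simp, rule estimates)
qed

end
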